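(* For every real $\beta$: there is a function $a(t)\ge0$ with $a(t)\to0$ as $|t|\to\infty$ such that the spectrum of $M(t)=(d(t)+d(t)^* )^2$ is contained in $[0,a(t)]$; $d(t)\to0$ as $|t|\to\infty$; and as $t\to+\infty$ (and likewise as $t\to-\infty$) $b(t)$ converges to an operator $b_\infty$ satisfying $b_\infty^2=L$. All convergences are in operator norm.
   Context: Let $G$ be a finite simple graph. For $k\ge0$ let $\Omega_k$ be the space of complex-valued functions on the (oriented) $k$-simplices of $G$ (complete subgraphs with $k+1$ vertices), $\Omega=\bigoplus_k\Omega_k$. The exterior derivative $d_0:\Omega_k\to\Omega_{k+1}$ is $(d_0f)(x_0,\dots,x_{k+1})=\sum_{j}(-1)^jf(x_0,\dots,\hat x_j,\dots,x_{k+1})$, $D_0=d_0+d_0^*$, $L=D_0^2$. For a self-adjoint operator $D$ on $\Omega$ whose blocks $\Omega_k\to\Omega_j$ vanish unless $|j-k|\le1$, write $D=d+d^*+b$ with $d$ the blocks $\Omega_k\to\Omega_{k+1}$ and $b$ the block-diagonal part. The Dirac deformation with real parameter $\beta$ is the solution $D(t)$ of $D'=BD-DB$, $D(0)=D_0$, with $B(t)=d(t)-d(t)^*+i\beta b(t)$, $D(t)=d(t)+d(t)^*+b(t)$ (the solution exists for all real $t$ and keeps this form). *)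

theory Defs
  imports "HOL-Analysis.Analysis"
begin

text \<open>Operators on Omega are represented as matrices indexed by simplices
  (nonempty cliques, as vertex sets); only entries indexed by simplices matter.
  Orientation of a simplex: the increasing order of its vertices w.r.t. the
  linear order on the vertex type.\<close>

type_synonym 'v op = "'v set \<Rightarrow> 'v set \<Rightarrow> complex"

definition is_clique :: "'v set \<Rightarrow> ('v \<Rightarrow> 'v \<Rightarrow> bool) \<Rightarrow> 'v set \<Rightarrow> bool" where
  "is_clique V E x \<longleftrightarrow> x \<subseteq> V \<and> (\<forall>u\<in>x. \<forall>w\<in>x. u \<noteq> w \<longrightarrow> E u w)"

definition simplices :: "'v set \<Rightarrow> ('v \<Rightarrow> 'v \<Rightarrow> bool) \<Rightarrow> 'v set set" where
  "simplices V E = {x. x \<noteq> {} \<and> is_clique V E x}"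

definition mmul :: "'v set set \<Rightarrow> 'v op \<Rightarrow> 'v op \<Rightarrow> 'v op" where
  "mmul S A C = (\<lambda>y x. \<Sum>z\<in>S. A y z * C z x)"

definition madd :: "'v op \<Rightarrow> 'v op \<Rightarrow> 'v op" where
  "madd A C = (\<lambda>y x. A y x + C y x)"

definition msub :: "'v op \<Rightarrow> 'v op \<Rightarrow> 'v op" where
  "msub A C = (\<lambda>y x. A y x - C y x)"

definition adj :: "'v op \<Rightarrow> 'v op" where
  "adj A = (\<lambda>y x. cnj (A x y))"

text \<open>Exterior derivative d0: (d0 f)(y) = sum_j (-1)^j f(y without y_j),
  where y_0 < y_1 < ... are the vertices of y in increasing order.\<close>
definition d0 :: "'v::linorder set set \<Rightarrow> 'v op" where
  "d0 S = (\<lambda>y x. if y \<in> S \<and> x \<in> S \<and> x \<subseteq> y \<and> card y = card x + 1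
      then (-1) ^ card {v\<in>y. v < (THE w. w \<in> y - x)} else 0)"

definition Dirac0 :: "'v::linorder set set \<Rightarrow> 'v op" where
  "Dirac0 S = madd (d0 S) (adj (d0 S))"

definition Laplacian :: "'v::linorder set set \<Rightarrow> 'v op" where
  "Laplacian S = mmul S (Dirac0 S) (Dirac0 S)"

text \<open>Blocks Omega_k -> Omega_(k+1) (a k-simplex has k+1 vertices).\<close>
definition dpart :: "'v op \<Rightarrow> 'v op" where
  "dpart A = (\<lambda>y x. if card y = card x + 1 then A y x else 0)"

definition bpart :: "'v op \<Rightarrow> 'v op" where
  "bpart A = (\<lambda>y x. if card y = card x then A y x else 0)"

definition Bop :: "real \<Rightarrow> 'v op \<Rightarrow> 'v op" where
  "Bop \<beta> A = (\<lambda>y x. dpart A y x - adj (dpart A) y x + \<i> * of_real \<beta> * bpart A y x)"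

definition l2norm :: "'v set set \<Rightarrow> ('v set \<Rightarrow> complex) \<Rightarrow> real" where
  "l2norm S f = sqrt (\<Sum>x\<in>S. (cmod (f x))\<^sup>2)"

definition opnorm :: "'v set set \<Rightarrow> 'v op \<Rightarrow> real" where
  "opnorm S A = Sup {l2norm S (\<lambda>y. \<Sum>x\<in>S. A y x * f x) | f. l2norm S f \<le> 1}"

definition op_spectrum :: "'v set set \<Rightarrow> 'v op \<Rightarrow> complex set" where
  "op_spectrum S A = {c. \<exists>f. (\<exists>x\<in>S. f x \<noteq> 0) \<and>
      (\<forall>y\<in>S. (\<Sum>x\<in>S. A y x * f x) = c * f y)}"

end

theory Submission
  imports Defs
begin

text \<open>Along the deformation \<open>D' = [B, D]\<close> three properties of \<open>D(0) = d\<^sub>0 + d\<^sub>0\<^sup>*\<close> persist: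
  \<open>D\<^sup>* = D\<close>, \<open>D\<close> consists of the blocks \<open>d\<close>, \<open>d\<^sup>*\<close>, \<open>b\<close> only, and \<open>D\<^sup>2 = L\<close>. Their defects satisfy a
  linear differential inequality and vanish initially, so by Gronwall they vanish forever. Hence
  \<open>\<parallel>D\<parallel>\<^sup>2 = tr L\<close> is conserved and \<open>D\<close> stays bounded. The weighted trace
  \<open>g = \<Sum>\<^sub>k (k + 1) tr b\<^sub>k\<close> satisfies \<open>g' = 2 \<parallel>d\<parallel>\<^sup>2\<close>, so \<open>\<parallel>d\<parallel>\<^sup>2\<close> is integrable over the whole line;
  being Lipschitz it tends to \<open>0\<close> (Barbalat). On the diagonal blocks \<open>|b'| \<le> 4 \<parallel>d\<parallel>\<^sup>2 = 2 g'\<close>, so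
  every entry of \<open>b\<close> converges at both ends, and the limit squares to \<open>lim D\<^sup>2 = L\<close> because
  \<open>d \<rightarrow> 0\<close>. Finally the spectrum of \<open>(d + d\<^sup>*)\<^sup>2\<close> lies in \<open>[0, \<parallel>d + d\<^sup>*\<parallel>\<^sup>2]\<close>, and
  \<open>\<parallel>d + d\<^sup>*\<parallel>\<^sup>2 \<le> 4 \<parallel>d\<parallel>\<^sup>2\<close>; all norms are Frobenius norms.\<close>

section \<open>Matrix algebra on \<Omega>\<close>

definition mscale :: "complex \<Rightarrow> 'v op \<Rightarrow> 'v op" where
  "mscale c A = (\<lambda>y x. c * A y x)"

definition mcomm :: "'v set set \<Rightarrow> 'v op \<Rightarrow> 'v op \<Rightarrow> 'v op" where
  "mcomm S A C = msub (mmul S A C) (mmul S C A)"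

lemma mmul_assoc: "mmul S (mmul S A B) C = mmul S A (mmul S B C)"
  by (auto simp: mmul_def fun_eq_iff sum_distrib_left sum_distrib_right mult.assoc intro: sum.swap)

lemma mmul_msub_left: "mmul S (msub A B) C = msub (mmul S A C) (mmul S B C)"
  by (auto simp: mmul_def msub_def fun_eq_iff algebra_simps sum_subtractf)

lemma mmul_msub_right: "mmul S C (msub A B) = msub (mmul S C A) (mmul S C B)"
  by (auto simp: mmul_def msub_def fun_eq_iff algebra_simps sum_subtractf)

lemma mmul_madd_left: "mmul S (madd A B) C = madd (mmul S A C) (mmul S B C)"
  by (auto simp: mmul_def madd_def fun_eq_iff algebra_simps sum.distrib)

lemma mmul_madd_right: "mmul S C (madd A B) = madd (mmul S C A) (mmul S C B)"
  by (auto simp: mmul_def madd_def fun_eq_iff algebra_simps sum.distrib)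

lemma mmul_mscale_left: "mmul S (mscale c A) C = mscale c (mmul S A C)"
  by (simp add: mmul_def mscale_def fun_eq_iff sum_distrib_left mult.assoc)

lemma mmul_mscale_right: "mmul S C (mscale c A) = mscale c (mmul S C A)"
  by (simp add: mmul_def mscale_def fun_eq_iff sum_distrib_left algebra_simps)

lemma mmul_cong:
  assumes "\<forall>y\<in>S. \<forall>x\<in>S. A y x = A' y x" "\<forall>y\<in>S. \<forall>x\<in>S. C y x = C' y x" "y \<in> S" "x \<in> S"
  shows "mmul S A C y x = mmul S A' C' y x"
  unfolding mmul_def using assms by (auto intro!: sum.cong)

lemma adj_adj [simp]: "adj (adj A) = A"
  by (simp add: adj_def)

lemma adj_mmul: "adj (mmul S A B) = mmul S (adj B) (adj A)"
  by (auto simp: mmul_def adj_def fun_eq_iff mult.commute)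

lemma adj_msub: "adj (msub A B) = msub (adj A) (adj B)"
  by (simp add: adj_def msub_def fun_eq_iff)

lemma adj_madd: "adj (madd A B) = madd (adj A) (adj B)"
  by (simp add: adj_def madd_def fun_eq_iff)

lemma adj_mcomm: "adj (mcomm S A C) = mcomm S (adj C) (adj A)"
  by (simp add: mcomm_def adj_msub adj_mmul)

lemma mcomm_madd_left: "mcomm S (madd A B) C = madd (mcomm S A C) (mcomm S B C)"
  unfolding mcomm_def mmul_madd_left mmul_madd_right by (simp add: madd_def msub_def fun_eq_iff)

lemma mcomm_msub_left: "mcomm S (msub A B) C = msub (mcomm S A C) (mcomm S B C)"
  unfolding mcomm_def mmul_msub_left mmul_msub_right by (simp add: msub_def fun_eq_iff)

lemma mcomm_mscale_left: "mcomm S (mscale c A) C = mscale c (mcomm S A C)"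
  unfolding mcomm_def mmul_mscale_left mmul_mscale_right
  by (simp add: mscale_def msub_def fun_eq_iff algebra_simps)

lemma mcomm_jacobi:
  "mcomm S (mcomm S B D) L = madd (mcomm S B (mcomm S D L)) (mcomm S (mcomm S B L) D)"
  unfolding mcomm_def mmul_msub_left mmul_msub_right mmul_assoc
  by (simp add: msub_def madd_def fun_eq_iff)


section \<open>Block structure\<close>

definition dstarpart :: "'v op \<Rightarrow> 'v op" where
  "dstarpart A = (\<lambda>y x. if card x = card y + 1 then A y x else 0)"

definition offtridiag :: "'v op \<Rightarrow> 'v op" where
  "offtridiag A = (\<lambda>y x. if card y = card x \<or> card y = card x + 1 \<or> card x = card y + 1
     then 0 else A y x)"

definition blockdiag :: "'v op \<Rightarrow> bool" where
  "blockdiag L \<longleftrightarrow> (\<forall>y x. card y \<noteq> card x \<longrightarrow> L y x = 0)"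

lemma Bop_eq:
  "Bop \<beta> A = madd (msub (dpart A) (adj (dpart A))) (mscale (\<i> * of_real \<beta>) (bpart A))"
  by (simp add: Bop_def madd_def msub_def mscale_def fun_eq_iff)

lemma blockdiag_mmul_dpart_left:
  "blockdiag L \<Longrightarrow> mmul S (dpart A) L = dpart (mmul S A L)"
  by (auto simp: blockdiag_def mmul_def dpart_def fun_eq_iff intro!: sum.cong sum.neutral)

lemma blockdiag_mmul_dpart_right:
  "blockdiag L \<Longrightarrow> mmul S L (dpart A) = dpart (mmul S L A)"
  by (auto simp: blockdiag_def mmul_def dpart_def fun_eq_iff intro!: sum.cong sum.neutral)

lemma blockdiag_mmul_bpart_left:
  "blockdiag L \<Longrightarrow> mmul S (bpart A) L = bpart (mmul S A L)"
  by (auto simp: blockdiag_def mmul_def bpart_def fun_eq_iff intro!: sum.cong sum.neutral)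

lemma blockdiag_mmul_bpart_right:
  "blockdiag L \<Longrightarrow> mmul S L (bpart A) = bpart (mmul S L A)"
  by (auto simp: blockdiag_def mmul_def bpart_def fun_eq_iff intro!: sum.cong sum.neutral)

lemma blockdiag_mcomm_dpart: "blockdiag L \<Longrightarrow> mcomm S (dpart A) L = dpart (mcomm S A L)"
  by (simp add: mcomm_def blockdiag_mmul_dpart_left blockdiag_mmul_dpart_right)
     (simp add: dpart_def msub_def fun_eq_iff)

lemma blockdiag_mcomm_bpart: "blockdiag L \<Longrightarrow> mcomm S (bpart A) L = bpart (mcomm S A L)"
  by (simp add: mcomm_def blockdiag_mmul_bpart_left blockdiag_mmul_bpart_right)
     (simp add: bpart_def msub_def fun_eq_iff)

lemma mcomm_Bop_blockdiag:
  assumes blk: "blockdiag L" and herm: "adj L = L"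
  shows "mcomm S (Bop \<beta> A) L = madd (madd (dpart (mcomm S A L)) (adj (dpart (mcomm S A L))))
           (mscale (\<i> * of_real \<beta>) (bpart (mcomm S A L)))"
proof -
  have "mcomm S (adj (dpart A)) L = adj (mcomm S L (dpart A))"
    using herm by (metis adj_mcomm)
  also have "\<dots> = mscale (-1) (adj (mcomm S (dpart A) L))"
    by (simp add: mcomm_def adj_def mscale_def msub_def fun_eq_iff)
  finally have "mcomm S (adj (dpart A)) L = mscale (-1) (adj (dpart (mcomm S A L)))"
    using blockdiag_mcomm_dpart[OF blk] by simp
  then show ?thesis
    unfolding Bop_eq mcomm_madd_left mcomm_msub_left mcomm_mscale_left
      blockdiag_mcomm_dpart[OF blk] blockdiag_mcomm_bpart[OF blk]
    by (simp add: madd_def msub_def mscale_def fun_eq_iff)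
qed


section \<open>The simplicial complex and \<open>d\<^sub>0 \<circ> d\<^sub>0 = 0\<close>\<close>

lemma finite_simplices: "finite V \<Longrightarrow> finite (simplices V E)"
  unfolding simplices_def is_clique_def by (rule finite_subset[of _ "Pow V"]) auto

lemma finite_simplex: "finite V \<Longrightarrow> x \<in> simplices V E \<Longrightarrow> finite x"
  unfolding simplices_def is_clique_def by (auto intro: finite_subset)

lemma simplex_subset: "y \<in> simplices V E \<Longrightarrow> x \<subseteq> y \<Longrightarrow> x \<noteq> {} \<Longrightarrow> x \<in> simplices V E"
  unfolding simplices_def is_clique_def by auto

lemma d0_nonzero_imp:
  "d0 S y x \<noteq> 0 \<Longrightarrow> y \<in> S \<and> x \<in> S \<and> x \<subseteq> y \<and> card y = card x + 1"
  by (auto simp: d0_def split: if_splits)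

lemma d0_insert:
  fixes a :: "'v::linorder"
  assumes "finite x" "a \<notin> x" "insert a x \<in> S" "x \<in> S"
  shows "d0 S (insert a x) x = (-1) ^ card {v\<in>x. v < a}"
proof -
  have "insert a x - x = {a}" "{v\<in>insert a x. v < a} = {v\<in>x. v < a}"
    using assms(2) by auto
  then show ?thesis using assms by (auto simp: d0_def)
qed

lemma d0_mult_d0_outside:
  fixes x y :: "'v::linorder set"
  assumes "finite y" "x \<subseteq> y" "y - x = {u, w}" "z \<notin> {insert u x, insert w x}"
  shows "d0 S y z * d0 S z x = 0"
proof (rule ccontr)
  assume "d0 S y z * d0 S z x \<noteq> 0"
  then have xz: "x \<subseteq> z" and zy: "z \<subseteq> y" and "card z = card x + 1"
    by (auto dest!: d0_nonzero_imp)
  moreover have "finite x" using assms(1,2) finite_subset by blast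
  ultimately have "card (z - x) = 1" using card_Diff_subset[OF _ xz] by simp
  then obtain a where "z - x = {a}" by (auto simp: card_Suc_eq)
  then have "z = insert a x" "a \<in> {u, w}" using xz zy assms(3) by auto
  then show False using assms(4) by auto
qed

text \<open>The two paths \<open>x \<subset> x \<union> {u} \<subset> y\<close> and \<open>x \<subset> x \<union> {w} \<subset> y\<close> carry opposite signs.\<close>
lemma d0_squared:
  fixes V :: "'v::linorder set"
  assumes finV: "finite V" and S: "S = simplices V E"
  shows "mmul S (d0 S) (d0 S) y x = 0"
proof (cases "\<exists>z\<in>S. d0 S y z * d0 S z x \<noteq> 0")
  case False
  then show ?thesis by (auto simp: mmul_def intro!: sum.neutral)
next
  case True
  then obtain z0 where "d0 S y z0 \<noteq> 0" "d0 S z0 x \<noteq> 0" by auto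
  then have yS: "y \<in> S" and xS: "x \<in> S" and xy: "x \<subseteq> y" and cy: "card y = card x + 2"
    by (auto dest!: d0_nonzero_imp)
  have fy: "finite y" using finite_simplex[OF finV] yS S by blast
  then have fx: "finite x" using finite_subset[OF xy] by blast
  have "card (y - x) = 2" using cy card_Diff_subset[OF fx xy] by linarith
  then obtain u w where uw: "y - x = {u, w}" "u < w"
    by (auto simp: card_2_iff) (metis insert_commute neqE)
  then have ux: "u \<notin> x" "w \<notin> x" and y: "y = insert w (insert u x)" "y = insert u (insert w x)"
    using xy by auto
  have uxS: "insert u x \<in> S" and wxS: "insert w x \<in> S"
    using simplex_subset[of y V E] yS y S by auto
  have "mmul S (d0 S) (d0 S) y x = (\<Sum>z\<in>{insert u x, insert w x}. d0 S y z * d0 S z x)"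
    unfolding mmul_def
    by (rule sum.mono_neutral_right)
       (use finite_simplices[OF finV] S uxS wxS d0_mult_d0_outside[OF fy xy uw(1)] in auto)
  also have "\<dots> = d0 S y (insert u x) * d0 S (insert u x) x + d0 S y (insert w x) * d0 S (insert w x) x"
    using ux uw by (subst sum.insert) auto
  also have "\<dots> = 0"
  proof -
    have "{v\<in>insert u x. v < w} = insert u {v\<in>x. v < w}" "{v\<in>insert w x. v < u} = {v\<in>x. v < u}"
      using uw by auto
    then show ?thesis
      using d0_insert[of x u] d0_insert[of x w] d0_insert[of "insert u x" w] d0_insert[of "insert w x" u]
        fx ux uw y yS uxS wxS xS by simp
  qed
  finally show ?thesis .
qed

lemma adj_Dirac0: "adj (Dirac0 S) = Dirac0 S"
  unfolding Dirac0_def adj_madd adj_adj by (simp add: madd_def fun_eq_iff add.commute)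

lemma adj_Laplacian: "adj (Laplacian S) = Laplacian S"
  by (simp add: Laplacian_def adj_mmul adj_Dirac0)

lemma blockdiag_Laplacian:
  fixes V :: "'v::linorder set"
  assumes finV: "finite V" and S: "S = simplices V E"
  shows "blockdiag (Laplacian S)"
  unfolding blockdiag_def
proof (intro allI impI)
  fix y x :: "'v set"
  assume ne: "card y \<noteq> card x"
  let ?d = "d0 S"
  have "mmul S (adj ?d) (adj ?d) y x = 0"
    using d0_squared[OF finV S, of x y] by (simp add: adj_mmul[symmetric]) (simp add: adj_def)
  moreover have "mmul S ?d (adj ?d) y x = 0" "mmul S (adj ?d) ?d y x = 0"
    unfolding mmul_def adj_def d0_def using ne by (auto intro!: sum.neutral)
  ultimately show "Laplacian S y x = 0"
    unfolding Laplacian_def Dirac0_def mmul_madd_left mmul_madd_right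
    by (simp add: madd_def d0_squared[OF finV S])
qed


section \<open>Frobenius norm, operator norm and spectrum\<close>

definition frob_sq :: "'v set set \<Rightarrow> 'v op \<Rightarrow> real" where
  "frob_sq S A = (\<Sum>y\<in>S. \<Sum>x\<in>S. (cmod (A y x))\<^sup>2)"

lemma frob_sq_nonneg: "0 \<le> frob_sq S A"
  unfolding frob_sq_def by (intro sum_nonneg) auto

lemma frob_sq_adj: "frob_sq S (adj A) = frob_sq S A"
  unfolding frob_sq_def adj_def by (subst sum.swap) simp

lemma row_le_frob_sq:
  "finite S \<Longrightarrow> y \<in> S \<Longrightarrow> (\<Sum>x\<in>S. (cmod (A y x))\<^sup>2) \<le> frob_sq S A"
  unfolding frob_sq_def by (rule member_le_sum) (auto intro: sum_nonneg)

lemma column_le_frob_sq: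
  "finite S \<Longrightarrow> x \<in> S \<Longrightarrow> (\<Sum>y\<in>S. (cmod (A y x))\<^sup>2) \<le> frob_sq S A"
  unfolding frob_sq_def by (subst sum.swap) (rule member_le_sum, auto intro: sum_nonneg)

lemma entry_le_frob_sq:
  assumes "finite S" "y \<in> S" "x \<in> S"
  shows "(cmod (A y x))\<^sup>2 \<le> frob_sq S A"
proof -
  have "(cmod (A y x))\<^sup>2 \<le> (\<Sum>x\<in>S. (cmod (A y x))\<^sup>2)"
    using assms by (intro member_le_sum) auto
  then show ?thesis using row_le_frob_sq[OF assms(1,2), of A] by linarith
qed

lemma entry_le_sqrt_frob_sq:
  "finite S \<Longrightarrow> y \<in> S \<Longrightarrow> x \<in> S \<Longrightarrow> cmod (A y x) \<le> sqrt (frob_sq S A)"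
  by (intro real_le_rsqrt entry_le_frob_sq)

lemma entries_le_sqrt_if_frob_sq_le:
  "finite S \<Longrightarrow> frob_sq S A \<le> c \<Longrightarrow> \<forall>y\<in>S. \<forall>x\<in>S. cmod (A y x) \<le> sqrt c"
  by (meson entry_le_sqrt_frob_sq order.trans real_sqrt_le_mono)

lemma tendsto_frob_sq_zero:
  assumes "\<forall>y\<in>S. \<forall>x\<in>S. ((\<lambda>t. A t y x) \<longlongrightarrow> 0) F"
  shows "((\<lambda>t. frob_sq S (A t)) \<longlongrightarrow> 0) F"
proof -
  have "((\<lambda>t. frob_sq S (A t)) \<longlongrightarrow> (\<Sum>y\<in>S. \<Sum>x\<in>S. (cmod (0::complex))\<^sup>2)) F"
    unfolding frob_sq_def using assms by (intro tendsto_sum tendsto_power tendsto_norm) auto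
  then show ?thesis by simp
qed

lemma frob_sq_madd_le: "frob_sq S (madd A C) \<le> 2 * frob_sq S A + 2 * frob_sq S C"
proof -
  have "(cmod (A y x + C y x))\<^sup>2 \<le> 2 * (cmod (A y x))\<^sup>2 + 2 * (cmod (C y x))\<^sup>2" for y x
  proof -
    have "(cmod (A y x + C y x))\<^sup>2 \<le> (cmod (A y x) + cmod (C y x))\<^sup>2"
      by (intro power_mono norm_triangle_ineq) simp
    also have "\<dots> \<le> 2 * (cmod (A y x))\<^sup>2 + 2 * (cmod (C y x))\<^sup>2"
      using sum_squares_bound[of "cmod (A y x)" "cmod (C y x)"] by (simp add: power2_sum)
    finally show ?thesis .
  qed
  then show ?thesis
    unfolding frob_sq_def madd_def
    by (simp add: sum_distrib_left sum.distrib[symmetric] sum_mono)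
qed

definition frob_inner :: "'v set set \<Rightarrow> 'v op \<Rightarrow> 'v op \<Rightarrow> real" where
  "frob_inner S A C = (\<Sum>y\<in>S. \<Sum>x\<in>S. Re (cnj (A y x) * C y x))"

lemma abs_frob_inner_le:
  assumes "\<forall>y\<in>S. \<forall>x\<in>S. cmod (A y x) \<le> a" "\<forall>y\<in>S. \<forall>x\<in>S. cmod (C y x) \<le> c"
  shows "\<bar>frob_inner S A C\<bar> \<le> real (card S) * real (card S) * (a * c)"
proof -
  have "\<bar>Re (cnj (A y x) * C y x)\<bar> \<le> a * c" if "y \<in> S" "x \<in> S" for y x
  proof -
    have "\<bar>Re (cnj (A y x) * C y x)\<bar> \<le> cmod (A y x) * cmod (C y x)"
      using abs_Re_le_cmod by (metis complex_mod_cnj norm_mult)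
    also have "\<dots> \<le> a * c"
      using assms that by (intro mult_mono) (auto intro: order.trans[OF norm_ge_zero])
    finally show ?thesis .
  qed
  then have "\<bar>frob_inner S A C\<bar> \<le> (\<Sum>y\<in>S. \<Sum>x\<in>S. a * c)"
    unfolding frob_inner_def
    by (intro order.trans[OF sum_abs] sum_mono order.trans[OF sum_abs]) auto
  then show ?thesis by simp
qed

lemma cmod_sum_mult_square_le:
  "(cmod (\<Sum>x\<in>S. a x * f x))\<^sup>2 \<le> (\<Sum>x\<in>S. (cmod (a x))\<^sup>2) * (\<Sum>x\<in>S. (cmod (f x))\<^sup>2)"
proof -
  have "cmod (\<Sum>x\<in>S. a x * f x) \<le> (\<Sum>x\<in>S. cmod (a x) * cmod (f x))"
    by (rule order.trans[OF norm_sum]) (simp add: norm_mult)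
  then have "(cmod (\<Sum>x\<in>S. a x * f x))\<^sup>2 \<le> (\<Sum>x\<in>S. cmod (a x) * cmod (f x))\<^sup>2"
    by (intro power_mono) auto
  also have "\<dots> \<le> (\<Sum>x\<in>S. (cmod (a x))\<^sup>2) * (\<Sum>x\<in>S. (cmod (f x))\<^sup>2)"
    by (rule Cauchy_Schwarz_ineq_sum)
  finally show ?thesis .
qed

lemma l2norm_apply_le: "l2norm S (\<lambda>y. \<Sum>x\<in>S. A y x * f x) \<le> sqrt (frob_sq S A) * l2norm S f"
proof -
  have "(\<Sum>y\<in>S. (cmod (\<Sum>x\<in>S. A y x * f x))\<^sup>2) \<le> (\<Sum>y\<in>S. (\<Sum>x\<in>S. (cmod (A y x))\<^sup>2) * (\<Sum>x\<in>S. (cmod (f x))\<^sup>2))"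
    by (intro sum_mono cmod_sum_mult_square_le)
  then show ?thesis
    by (simp add: l2norm_def frob_sq_def sum_distrib_right real_sqrt_mult[symmetric])
qed

lemma opnorm_nonneg_le_sqrt_frob_sq:
  "0 \<le> opnorm S A \<and> opnorm S A \<le> sqrt (frob_sq S A)"
proof -
  let ?N = "{l2norm S (\<lambda>y. \<Sum>x\<in>S. A y x * f x) | f. l2norm S f \<le> 1}"
  have ub: "v \<le> sqrt (frob_sq S A)" if v: "v \<in> ?N" for v
  proof -
    obtain f where f: "v = l2norm S (\<lambda>y. \<Sum>x\<in>S. A y x * f x)" "l2norm S f \<le> 1"
      using v by blast
    have "v \<le> sqrt (frob_sq S A) * l2norm S f" unfolding f(1) by (rule l2norm_apply_le)
    also have "\<dots> \<le> sqrt (frob_sq S A)" using f(2) frob_sq_nonneg[of S A] by (simp add: mult_left_le)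
    finally show ?thesis .
  qed
  have zero: "0 \<in> ?N"
    by (intro CollectI exI[of _ "\<lambda>_. 0"]) (simp add: l2norm_def)
  have "bdd_above ?N" using ub by (intro bdd_aboveI) blast
  then have "0 \<le> Sup ?N" by (rule cSup_upper[OF zero])
  moreover have "Sup ?N \<le> sqrt (frob_sq S A)" using zero ub by (intro cSup_least) auto
  ultimately show ?thesis unfolding opnorm_def by blast
qed

lemma tendsto_opnorm_zero:
  assumes "((\<lambda>t. frob_sq S (A t)) \<longlongrightarrow> 0) F"
  shows "((\<lambda>t. opnorm S (A t)) \<longlongrightarrow> 0) F"
proof (rule tendsto_sandwich[of "\<lambda>_. 0" _ _ "\<lambda>t. sqrt (frob_sq S (A t))"])
  show "((\<lambda>t. sqrt (frob_sq S (A t))) \<longlongrightarrow> 0) F"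
    using tendsto_real_sqrt[OF assms] by simp
qed (simp_all add: opnorm_nonneg_le_sqrt_frob_sq)

lemma quadratic_form_mmul_selfadjoint:
  assumes herm: "\<forall>y\<in>S. \<forall>x\<in>S. A y x = cnj (A x y)"
  shows "(\<Sum>y\<in>S. cnj (f y) * (\<Sum>x\<in>S. mmul S A A y x * f x))
       = of_real (\<Sum>z\<in>S. (cmod (\<Sum>x\<in>S. A z x * f x))\<^sup>2)"
proof -
  define g where "g z = (\<Sum>x\<in>S. A z x * f x)" for z
  have cnj_g: "(\<Sum>y\<in>S. cnj (f y) * A y z) = cnj (g z)" if z: "z \<in> S" for z
    unfolding g_def cnj_sum
  proof (rule sum.cong[OF refl])
    fix y assume y: "y \<in> S"
    have "A y z = cnj (A z y)" using herm y z by blast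
    then show "cnj (f y) * A y z = cnj (A z y * f y)" by (simp add: mult.commute)
  qed
  have "(\<Sum>x\<in>S. mmul S A A y x * f x) = (\<Sum>z\<in>S. A y z * g z)" for y
    unfolding mmul_def g_def sum_distrib_left sum_distrib_right
    by (subst sum.swap) (simp add: mult.assoc)
  then have "(\<Sum>y\<in>S. cnj (f y) * (\<Sum>x\<in>S. mmul S A A y x * f x))
      = (\<Sum>y\<in>S. cnj (f y) * (\<Sum>z\<in>S. A y z * g z))"
    by simp
  also have "\<dots> = (\<Sum>z\<in>S. (\<Sum>y\<in>S. cnj (f y) * A y z) * g z)"
    unfolding sum_distrib_left sum_distrib_right by (subst sum.swap) (simp add: mult.assoc)
  also have "\<dots> = (\<Sum>z\<in>S. cnj (g z) * g z)" using cnj_g by (intro sum.cong) auto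
  also have "\<dots> = of_real (\<Sum>z\<in>S. (cmod (g z))\<^sup>2)" unfolding of_real_sum
    by (intro sum.cong refl) (simp only: complex_norm_square mult.commute)
  finally show ?thesis by (simp add: g_def)
qed

text \<open>An eigenvalue of \<open>A\<^sup>2\<close> is the Rayleigh quotient \<open>\<parallel>A f\<parallel>\<^sup>2 / \<parallel>f\<parallel>\<^sup>2\<close> of an eigenvector \<open>f\<close>.\<close>
lemma op_spectrum_mmul_selfadjoint:
  assumes finS: "finite S" and herm: "\<forall>y\<in>S. \<forall>x\<in>S. A y x = cnj (A x y)"
    and c: "c \<in> op_spectrum S (mmul S A A)"
  shows "Im c = 0 \<and> 0 \<le> Re c \<and> Re c \<le> frob_sq S A"
proof -
  obtain f where fne: "\<exists>x\<in>S. f x \<noteq> 0" and ev: "\<forall>y\<in>S. (\<Sum>x\<in>S. mmul S A A y x * f x) = c * f y"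
    using c unfolding op_spectrum_def by blast
  define nf where "nf = (\<Sum>y\<in>S. (cmod (f y))\<^sup>2)"
  define ng where "ng = (\<Sum>z\<in>S. (cmod (\<Sum>x\<in>S. A z x * f x))\<^sup>2)"
  have nf_pos: "nf > 0"
  proof -
    obtain x where x: "x \<in> S" "f x \<noteq> 0" using fne by blast
    have "(cmod (f x))\<^sup>2 \<le> nf" unfolding nf_def by (rule member_le_sum[OF x(1)]) (auto simp: finS)
    moreover have "(cmod (f x))\<^sup>2 > 0" using x by simp
    ultimately show ?thesis by linarith
  qed
  have "c * of_real nf = (\<Sum>y\<in>S. cnj (f y) * (c * f y))"
    unfolding nf_def of_real_sum sum_distrib_left
    by (intro sum.cong refl) (simp only: complex_norm_square mult.commute mult.left_commute)
  also have "\<dots> = (\<Sum>y\<in>S. cnj (f y) * (\<Sum>x\<in>S. mmul S A A y x * f x))"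
    using ev by (intro sum.cong) auto
  also have "\<dots> = of_real ng"
    unfolding ng_def by (rule quadratic_form_mmul_selfadjoint[OF herm])
  finally have c_eq: "c = of_real (ng / nf)" using nf_pos by (simp add: field_simps)
  have "ng \<le> (\<Sum>z\<in>S. (\<Sum>x\<in>S. (cmod (A z x))\<^sup>2) * nf)"
    unfolding ng_def nf_def by (intro sum_mono cmod_sum_mult_square_le)
  also have "\<dots> = frob_sq S A * nf" unfolding frob_sq_def by (simp add: sum_distrib_right)
  finally have "ng / nf \<le> frob_sq S A" using nf_pos by (simp add: divide_le_eq)
  moreover have "0 \<le> ng" unfolding ng_def by (auto intro: sum_nonneg)
  ultimately show ?thesis using c_eq nf_pos by simp
qed


section \<open>Real analysis\<close>

lemma has_real_derivative_cmod_square: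
  assumes "(h has_vector_derivative h') (at t)"
  shows "((\<lambda>s. (cmod (h s))\<^sup>2) has_real_derivative 2 * Re (cnj (h t) * h')) (at t)"
proof -
  have "((\<lambda>s. Re (h s * cnj (h s))) has_real_derivative Re (h t * cnj h' + h' * cnj (h t))) (at t)"
    by (intro has_field_derivative_Re has_vector_derivative_mult has_vector_derivative_cnj assms)
  moreover have "(cmod z)\<^sup>2 = Re (z * cnj z)" for z
    using arg_cong[OF complex_norm_square[of z], of Re] by simp
  ultimately show ?thesis by (simp add: algebra_simps)
qed

lemma has_real_derivative_frob_sq:
  assumes "\<forall>y\<in>S. \<forall>x\<in>S. ((\<lambda>s. A s y x) has_vector_derivative A' y x) (at t)"
  shows "((\<lambda>s. frob_sq S (A s)) has_real_derivative 2 * frob_inner S (A t) A') (at t)"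
  unfolding frob_sq_def frob_inner_def sum_distrib_left
  by (intro DERIV_sum has_real_derivative_cmod_square) (use assms in auto)

lemma has_vector_derivative_mmul:
  assumes "\<forall>y\<in>S. \<forall>x\<in>S. ((\<lambda>s. A s y x) has_vector_derivative A' y x) (at t)"
    and "\<forall>y\<in>S. \<forall>x\<in>S. ((\<lambda>s. C s y x) has_vector_derivative C' y x) (at t)"
    and "y \<in> S" "x \<in> S"
  shows "((\<lambda>s. mmul S (A s) (C s) y x) has_vector_derivative
            mmul S (A t) C' y x + mmul S A' (C t) y x) (at t)"
  unfolding mmul_def
  by (rule has_vector_derivative_eq_rhs, (rule has_vector_derivative_sum has_vector_derivative_mult)+)
     (use assms in \<open>auto simp: sum.distrib\<close>)

lemma gronwall_vanishing:
  fixes P P' :: "real \<Rightarrow> real"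
  assumes der: "\<And>t. (P has_real_derivative P' t) (at t)"
    and nonneg: "\<And>t. 0 \<le> P t" and zero: "P 0 = 0"
    and bound: "\<And>s. \<bar>s\<bar> \<le> \<bar>t\<bar> \<Longrightarrow> \<bar>P' s\<bar> \<le> K * P s"
  shows "P t = 0"
proof (cases "0 \<le> t")
  case True
  have "P t * exp (- K * t) \<le> P 0 * exp (- K * 0)"
  proof (rule DERIV_nonpos_imp_nonincreasing[of 0 t "\<lambda>s. P s * exp (- K * s)", OF True])
    fix s assume s: "0 \<le> s" "s \<le> t"
    have "((\<lambda>s. P s * exp (- K * s)) has_real_derivative (P' s - K * P s) * exp (- K * s)) (at s)"
      by (auto intro!: derivative_eq_intros der simp: algebra_simps)
    moreover have "(P' s - K * P s) * exp (- K * s) \<le> 0"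
      using bound[of s] s by (intro mult_nonpos_nonneg) auto
    ultimately show "\<exists>y. DERIV (\<lambda>s. P s * exp (- K * s)) s :> y \<and> y \<le> 0" by blast
  qed
  then show ?thesis using zero nonneg[of t] by (simp add: mult_le_0_iff)
next
  case False
  have "P t * exp (K * t) \<le> P 0 * exp (K * 0)"
  proof (rule DERIV_nonneg_imp_nondecreasing[of t 0 "\<lambda>s. P s * exp (K * s)"])
    show "t \<le> 0" using False by simp
    fix s assume s: "t \<le> s" "s \<le> 0"
    have "((\<lambda>s. P s * exp (K * s)) has_real_derivative (P' s + K * P s) * exp (K * s)) (at s)"
      by (auto intro!: derivative_eq_intros der simp: algebra_simps)
    moreover have "0 \<le> (P' s + K * P s) * exp (K * s)"
      using bound[of s] s False by (intro mult_nonneg_nonneg) auto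
    ultimately show "\<exists>y. DERIV (\<lambda>s. P s * exp (K * s)) s :> y \<and> 0 \<le> y" by blast
  qed
  then show ?thesis using zero nonneg[of t] by (simp add: mult_le_0_iff)
qed

lemma mono_if_nonneg_derivative:
  fixes G G' :: "real \<Rightarrow> real"
  assumes "\<And>t. (G has_real_derivative G' t) (at t)" "\<And>t. 0 \<le> G' t"
  shows "mono G"
  by (rule monoI, rule deriv_nonneg_imp_mono) (use assms in auto)

lemma mono_bounded_limit_at_top:
  fixes G :: "real \<Rightarrow> real"
  assumes "mono G" "\<And>t. \<bar>G t\<bar> \<le> M"
  shows "\<exists>l. (G \<longlongrightarrow> l) at_top"
proof -
  have "convergent (\<lambda>n. G (real n))"
  proof (rule Bseq_monoseq_convergent)
    show "Bseq (\<lambda>n. G (real n))" using assms(2) by (intro BseqI') auto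
    show "monoseq (\<lambda>n. G (real n))"
      unfolding monoseq_def using assms(1) by (auto simp: mono_def)
  qed
  then show ?thesis
    using tendsto_at_topI_sequentially_real[OF assms(1)] by (auto simp: convergent_def)
qed

lemma mono_bounded_limit_at_bot:
  fixes G :: "real \<Rightarrow> real"
  assumes "mono G" "\<And>t. \<bar>G t\<bar> \<le> M"
  shows "\<exists>l. (G \<longlongrightarrow> l) at_bot"
proof -
  have "mono (\<lambda>t. - G (- t))" using assms(1) by (auto simp: mono_def)
  then obtain l where "((\<lambda>t. - G (- t)) \<longlongrightarrow> l) at_top"
    using mono_bounded_limit_at_top[of _ M] assms(2) by fastforce
  then have "((\<lambda>t. G (- t)) \<longlongrightarrow> - l) at_top" using tendsto_minus by fastforce
  then show ?thesis by (auto simp: filterlim_at_bot_mirror)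
qed

lemma lipschitz_if_bounded_derivative:
  fixes f f' :: "real \<Rightarrow> real"
  assumes "\<And>t. (f has_real_derivative f' t) (at t)" "\<And>t. \<bar>f' t\<bar> \<le> C"
  shows "\<bar>f s - f t\<bar> \<le> C * \<bar>s - t\<bar>"
  using field_differentiable_bound[OF convex_UNIV, of f f' C s t] assms by simp

lemma increment_ge_if_lipschitz:
  fixes G N :: "real \<Rightarrow> real"
  assumes der: "\<And>t. (G has_real_derivative N t) (at t)"
    and lip: "\<And>s t. \<bar>N s - N t\<bar> \<le> C * \<bar>s - t\<bar>"
    and "0 \<le> C" "0 \<le> d" "C * d \<le> e / 2" and Nt: "e \<le> N t"
  shows "e / 2 * d \<le> G (t + d) - G t"
proof -
  have "G t - e / 2 * t \<le> G (t + d) - e / 2 * (t + d)"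
  proof (rule deriv_nonneg_imp_mono[of t "t + d"])
    fix s assume s: "s \<in> {t..t + d}"
    show "((\<lambda>s. G s - e / 2 * s) has_real_derivative N s - e / 2) (at s)"
      by (auto intro!: derivative_eq_intros der)
    have "C * \<bar>s - t\<bar> \<le> C * d" using s assms(3) by (intro mult_left_mono) auto
    then show "0 \<le> N s - e / 2" using lip[of s t] assms(5) Nt by linarith
  qed (use assms(4) in simp)
  then show ?thesis unfolding distrib_left by linarith
qed

text \<open>If \<open>N \<ge> e\<close> at arbitrarily late times, \<open>G\<close> would keep increasing by a fixed amount and
  could not converge.\<close>
lemma barbalat_at_top:
  fixes G N :: "real \<Rightarrow> real"
  assumes der: "\<And>t. (G has_real_derivative N t) (at t)" and nonneg: "\<And>t. 0 \<le> N t"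
    and bounded: "\<And>t. \<bar>G t\<bar> \<le> M" and lip: "\<And>s t. \<bar>N s - N t\<bar> \<le> C * \<bar>s - t\<bar>"
  shows "(N \<longlongrightarrow> 0) at_top"
proof (rule tendstoI)
  fix e :: real assume e: "e > 0"
  obtain l where l: "(G \<longlongrightarrow> l) at_top"
    using mono_bounded_limit_at_top[OF mono_if_nonneg_derivative[OF der nonneg] bounded] by blast
  define d where "d = e / (2 * max C 1)"
  have d: "d > 0" "max C 1 * d = e / 2" using e by (auto simp: d_def)
  have lip': "\<bar>N s - N t\<bar> \<le> max C 1 * \<bar>s - t\<bar>" for s t
    by (rule order.trans[OF lip mult_right_mono[OF max.cobounded1 abs_ge_zero]])
  have "((\<lambda>t. G (t + d)) \<longlongrightarrow> l) at_top"
    by (rule filterlim_compose[OF l])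
      (use filterlim_tendsto_add_at_top[OF tendsto_const filterlim_ident, of d] in \<open>simp add: add.commute\<close>)
  then have "((\<lambda>t. G (t + d) - G t) \<longlongrightarrow> 0) at_top" using tendsto_diff[OF _ l] by fastforce
  moreover have "0 < e / 2 * d" using e d by simp
  ultimately have "eventually (\<lambda>t. G (t + d) - G t < e / 2 * d) at_top"
    by (rule order_tendstoD(2))
  then show "eventually (\<lambda>t. dist (N t) 0 < e) at_top"
  proof (rule eventually_mono)
    fix t assume "G (t + d) - G t < e / 2 * d"
    moreover have "e / 2 * d \<le> G (t + d) - G t" if "e \<le> N t"
      using increment_ge_if_lipschitz[OF der lip' _ _ _ that] d by simp
    ultimately show "dist (N t) 0 < e" using nonneg[of t] by fastforce
  qed
qed

lemma barbalat_at_infinity: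
  fixes G N :: "real \<Rightarrow> real"
  assumes der: "\<And>t. (G has_real_derivative N t) (at t)" and nonneg: "\<And>t. 0 \<le> N t"
    and bounded: "\<And>t. \<bar>G t\<bar> \<le> M" and lip: "\<And>s t. \<bar>N s - N t\<bar> \<le> C * \<bar>s - t\<bar>"
  shows "(N \<longlongrightarrow> 0) at_infinity"
proof -
  have "((\<lambda>t. N (- t)) \<longlongrightarrow> 0) at_top"
  proof (rule barbalat_at_top[of "\<lambda>t. - G (- t)" _ M C])
    show "((\<lambda>t. - G (- t)) has_real_derivative N (- t)) (at t)" for t
      by (auto intro!: derivative_eq_intros DERIV_chain2[OF der])
    show "\<bar>N (- s) - N (- t)\<bar> \<le> C * \<bar>s - t\<bar>" for s t
      using lip[of "-s" "-t"] by (simp add: abs_minus_commute)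
  qed (use nonneg bounded in auto)
  then have "(N \<longlongrightarrow> 0) at_bot" by (simp add: filterlim_at_bot_mirror)
  then show ?thesis
    unfolding at_infinity_eq_at_top_bot
    using barbalat_at_top[OF der nonneg bounded lip] by (rule filterlim_sup[rotated])
qed

text \<open>Both \<open>G + h\<close> and \<open>G - h\<close> are monotone and bounded.\<close>
lemma limit_if_derivative_dominated:
  fixes h G :: "real \<Rightarrow> real"
  assumes dh: "\<And>t. (h has_real_derivative h' t) (at t)"
    and dG: "\<And>t. (G has_real_derivative G' t) (at t)"
    and dominated: "\<And>t. \<bar>h' t\<bar> \<le> G' t"
    and bh: "\<And>t. \<bar>h t\<bar> \<le> M1" and bG: "\<And>t. \<bar>G t\<bar> \<le> M2"
    and F: "F = at_top \<or> F = at_bot"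
  shows "\<exists>l. (h \<longlongrightarrow> l) F"
proof -
  have limit: "\<exists>l. (f \<longlongrightarrow> l) F" if "mono f" "\<And>t. \<bar>f t\<bar> \<le> M2 + M1" for f
    using F mono_bounded_limit_at_top[OF that] mono_bounded_limit_at_bot[OF that] by blast
  have "mono (\<lambda>t. G t + h t)"
  proof (rule mono_if_nonneg_derivative)
    show "((\<lambda>t. G t + h t) has_real_derivative G' t + h' t) (at t)" for t
      by (intro DERIV_add dG dh)
    show "0 \<le> G' t + h' t" for t using dominated[of t] by linarith
  qed
  moreover have "\<bar>G t + h t\<bar> \<le> M2 + M1" for t
    by (rule order.trans[OF abs_triangle_ineq add_mono[OF bG bh]])
  ultimately obtain l1 where l1: "((\<lambda>t. G t + h t) \<longlongrightarrow> l1) F" using limit by blast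
  have "mono (\<lambda>t. G t - h t)"
  proof (rule mono_if_nonneg_derivative)
    show "((\<lambda>t. G t - h t) has_real_derivative G' t - h' t) (at t)" for t
      by (intro DERIV_diff dG dh)
    show "0 \<le> G' t - h' t" for t using dominated[of t] by linarith
  qed
  moreover have "\<bar>G t - h t\<bar> \<le> M2 + M1" for t
    by (rule order.trans[OF abs_triangle_ineq4 add_mono[OF bG bh]])
  ultimately obtain l2 where l2: "((\<lambda>t. G t - h t) \<longlongrightarrow> l2) F" using limit by blast
  have "((\<lambda>t. ((G t + h t) - (G t - h t)) / 2) \<longlongrightarrow> (l1 - l2) / 2) F"
    by (intro tendsto_intros l1 l2) simp
  then have "(h \<longlongrightarrow> (l1 - l2) / 2) F" by simp
  then show ?thesis ..
qed

lemma complex_limit_if_derivative_dominated: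
  fixes h :: "real \<Rightarrow> complex" and G :: "real \<Rightarrow> real"
  assumes dh: "\<And>t. (h has_vector_derivative h' t) (at t)"
    and dG: "\<And>t. (G has_real_derivative G' t) (at t)"
    and dominated: "\<And>t. cmod (h' t) \<le> G' t"
    and bh: "\<And>t. cmod (h t) \<le> M1" and bG: "\<And>t. \<bar>G t\<bar> \<le> M2"
    and F: "F = at_top \<or> F = at_bot"
  shows "\<exists>l. (h \<longlongrightarrow> l) F"
proof -
  obtain a where a: "((\<lambda>t. Re (h t)) \<longlongrightarrow> a) F"
    using limit_if_derivative_dominated[OF has_field_derivative_Re[OF dh] dG _ _ bG F]
      abs_Re_le_cmod order.trans dominated bh by metis
  obtain b where b: "((\<lambda>t. Im (h t)) \<longlongrightarrow> b) F"
    using limit_if_derivative_dominated[OF has_field_derivative_Im[OF dh] dG _ _ bG F]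
      abs_Im_le_cmod order.trans dominated bh by metis
  have "(h \<longlongrightarrow> Complex a b) F" using a b by (simp add: tendsto_complex_iff)
  then show ?thesis by blast
qed


section \<open>Entrywise domination on compact time intervals\<close>

definition dominated :: "'v set set \<Rightarrow> real \<Rightarrow> (real \<Rightarrow> real) \<Rightarrow> (real \<Rightarrow> 'v op) \<Rightarrow> bool" where
  "dominated S T w X \<longleftrightarrow> (\<exists>K. \<forall>t\<in>{-T..T}. \<forall>y\<in>S. \<forall>x\<in>S. cmod (X t y x) \<le> K * w t)"

lemma dominated_madd:
  assumes "dominated S T w X" "dominated S T w Y"
  shows "dominated S T w (\<lambda>t. madd (X t) (Y t))"
proof -
  obtain K1 K2 where K1: "\<forall>t\<in>{-T..T}. \<forall>y\<in>S. \<forall>x\<in>S. cmod (X t y x) \<le> K1 * w t"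
    and K2: "\<forall>t\<in>{-T..T}. \<forall>y\<in>S. \<forall>x\<in>S. cmod (Y t y x) \<le> K2 * w t"
    using assms unfolding dominated_def by blast
  have "cmod (X t y x + Y t y x) \<le> (K1 + K2) * w t" if "t \<in> {-T..T}" "y \<in> S" "x \<in> S" for t y x
    using K1 K2 that norm_triangle_ineq[of "X t y x" "Y t y x"] by (fastforce simp: algebra_simps)
  then show ?thesis unfolding dominated_def madd_def by blast
qed

lemma dominated_mscale:
  assumes "dominated S T w X"
  shows "dominated S T w (\<lambda>t. mscale c (X t))"
proof -
  obtain K where K: "\<forall>t\<in>{-T..T}. \<forall>y\<in>S. \<forall>x\<in>S. cmod (X t y x) \<le> K * w t"
    using assms unfolding dominated_def by blast
  have "cmod (c * X t y x) \<le> (cmod c * K) * w t" if "t \<in> {-T..T}" "y \<in> S" "x \<in> S" for t y x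
    using K that by (auto simp: norm_mult mult.assoc intro: mult_left_mono)
  then show ?thesis unfolding dominated_def mscale_def by blast
qed

lemma dominated_msub:
  assumes "dominated S T w X" "dominated S T w Y"
  shows "dominated S T w (\<lambda>t. msub (X t) (Y t))"
proof -
  have "dominated S T w (\<lambda>t. madd (X t) (mscale (-1) (Y t)))"
    using assms by (intro dominated_madd dominated_mscale)
  moreover have "(\<lambda>t. madd (X t) (mscale (-1) (Y t))) = (\<lambda>t. msub (X t) (Y t))"
    by (simp add: madd_def msub_def mscale_def fun_eq_iff)
  ultimately show ?thesis by simp
qed

lemma dominated_entrywise:
  assumes "dominated S T w X"
    and "\<And>t y x. y \<in> S \<Longrightarrow> x \<in> S \<Longrightarrow> \<exists>y'\<in>S. \<exists>x'\<in>S. cmod (Y t y x) \<le> cmod (X t y' x')"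
  shows "dominated S T w Y"
proof -
  obtain K where K: "\<forall>t\<in>{-T..T}. \<forall>y\<in>S. \<forall>x\<in>S. cmod (X t y x) \<le> K * w t"
    using assms(1) unfolding dominated_def by blast
  have "cmod (Y t y x) \<le> K * w t" if "t \<in> {-T..T}" "y \<in> S" "x \<in> S" for t y x
    using assms(2) K that by (meson order.trans)
  then show ?thesis unfolding dominated_def by blast
qed

lemma dominated_adj: "dominated S T w X \<Longrightarrow> dominated S T w (\<lambda>t. adj (X t))"
  by (erule dominated_entrywise) (auto simp: adj_def)

lemma dominated_dpart: "dominated S T w X \<Longrightarrow> dominated S T w (\<lambda>t. dpart (X t))"
  by (erule dominated_entrywise) (auto simp: dpart_def)

lemma dominated_bpart: "dominated S T w X \<Longrightarrow> dominated S T w (\<lambda>t. bpart (X t))"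
  by (erule dominated_entrywise) (auto simp: bpart_def)

lemma dominated_dstarpart: "dominated S T w X \<Longrightarrow> dominated S T w (\<lambda>t. dstarpart (X t))"
  by (erule dominated_entrywise) (auto simp: dstarpart_def)

lemma dominated_offtridiag: "dominated S T w X \<Longrightarrow> dominated S T w (\<lambda>t. offtridiag (X t))"
  by (erule dominated_entrywise) (auto simp: offtridiag_def)

lemma cmod_mmul_le_card:
  assumes "\<And>z. z \<in> S \<Longrightarrow> cmod (A y z) * cmod (C z x) \<le> M"
  shows "cmod (mmul S A C y x) \<le> real (card S) * M"
proof -
  have "cmod (mmul S A C y x) \<le> (\<Sum>z\<in>S. cmod (A y z) * cmod (C z x))"
    unfolding mmul_def by (rule order.trans[OF norm_sum]) (simp add: norm_mult)
  also have "\<dots> \<le> (\<Sum>z\<in>S. M)" using assms by (intro sum_mono) auto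
  finally show ?thesis by simp
qed

lemma dominated_mmul_bounded_left:
  assumes "dominated S T (\<lambda>_. 1) A" "dominated S T w C"
  shows "dominated S T w (\<lambda>t. mmul S (A t) (C t))"
proof -
  obtain M K where M: "\<forall>t\<in>{-T..T}. \<forall>y\<in>S. \<forall>x\<in>S. cmod (A t y x) \<le> M * 1"
    and K: "\<forall>t\<in>{-T..T}. \<forall>y\<in>S. \<forall>x\<in>S. cmod (C t y x) \<le> K * w t"
    using assms unfolding dominated_def by blast
  have "cmod (mmul S (A t) (C t) y x) \<le> (real (card S) * M * K) * w t"
    if t: "t \<in> {-T..T}" and y: "y \<in> S" and x: "x \<in> S" for t y x
  proof -
    have "cmod (A t y z) * cmod (C t z x) \<le> M * (K * w t)" if z: "z \<in> S" for z
    proof -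
      have "cmod (A t y z) \<le> M" using M t y z by simp
      then have "0 \<le> M" by (rule order.trans[OF norm_ge_zero])
      then show ?thesis using M K t y z x by (intro mult_mono) auto
    qed
    then have "cmod (mmul S (A t) (C t) y x) \<le> real (card S) * (M * (K * w t))"
      by (rule cmod_mmul_le_card)
    then show ?thesis by (simp add: mult.assoc)
  qed
  then show ?thesis unfolding dominated_def by blast
qed

lemma dominated_mmul_bounded_right:
  assumes "dominated S T w A" "dominated S T (\<lambda>_. 1) C"
  shows "dominated S T w (\<lambda>t. mmul S (A t) (C t))"
proof -
  obtain M K where M: "\<forall>t\<in>{-T..T}. \<forall>y\<in>S. \<forall>x\<in>S. cmod (C t y x) \<le> M * 1"
    and K: "\<forall>t\<in>{-T..T}. \<forall>y\<in>S. \<forall>x\<in>S. cmod (A t y x) \<le> K * w t"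
    using assms unfolding dominated_def by blast
  have "cmod (mmul S (A t) (C t) y x) \<le> (real (card S) * M * K) * w t"
    if t: "t \<in> {-T..T}" and y: "y \<in> S" and x: "x \<in> S" for t y x
  proof -
    have "cmod (A t y z) * cmod (C t z x) \<le> M * (K * w t)" if z: "z \<in> S" for z
    proof -
      have "0 \<le> K * w t" using K t y z by (meson norm_ge_zero order.trans)
      then have "cmod (A t y z) * cmod (C t z x) \<le> (K * w t) * M"
        using M K t y z x by (intro mult_mono) auto
      then show ?thesis by (simp add: mult.commute)
    qed
    then have "cmod (mmul S (A t) (C t) y x) \<le> real (card S) * (M * (K * w t))"
      by (rule cmod_mmul_le_card)
    then show ?thesis by (simp add: mult.assoc)
  qed
  then show ?thesis unfolding dominated_def by blast
qed

lemma dominated_mcomm_bounded_left: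
  "dominated S T (\<lambda>_. 1) A \<Longrightarrow> dominated S T w C \<Longrightarrow> dominated S T w (\<lambda>t. mcomm S (A t) (C t))"
  unfolding mcomm_def by (intro dominated_msub dominated_mmul_bounded_left dominated_mmul_bounded_right)

lemma dominated_mcomm_bounded_right:
  "dominated S T w A \<Longrightarrow> dominated S T (\<lambda>_. 1) C \<Longrightarrow> dominated S T w (\<lambda>t. mcomm S (A t) (C t))"
  unfolding mcomm_def by (intro dominated_msub dominated_mmul_bounded_left dominated_mmul_bounded_right)

lemma abs_frob_inner_dominated:
  assumes P: "\<And>t. 0 \<le> P t" and X: "\<And>t. \<forall>y\<in>S. \<forall>x\<in>S. cmod (X t y x) \<le> sqrt (P t)"
    and Y: "dominated S T (\<lambda>t. sqrt (P t)) Y"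
  shows "\<exists>K. \<forall>t\<in>{-T..T}. \<bar>frob_inner S (X t) (Y t)\<bar> \<le> K * P t"
proof -
  obtain K where K: "\<forall>t\<in>{-T..T}. \<forall>y\<in>S. \<forall>x\<in>S. cmod (Y t y x) \<le> K * sqrt (P t)"
    using Y unfolding dominated_def by blast
  have "\<bar>frob_inner S (X t) (Y t)\<bar> \<le> (real (card S) * real (card S) * K) * P t"
    if t: "t \<in> {-T..T}" for t
  proof -
    have "\<bar>frob_inner S (X t) (Y t)\<bar>
        \<le> real (card S) * real (card S) * (sqrt (P t) * (K * sqrt (P t)))"
      by (rule abs_frob_inner_le) (use X K t in auto)
    also have "sqrt (P t) * (K * sqrt (P t)) = K * P t"
      using P[of t] by (simp add: mult.left_commute)
    finally show ?thesis by (simp add: mult.assoc)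
  qed
  then show ?thesis by blast
qed

lemma dominated_one_if_continuous:
  assumes "finite S" "\<And>t y x. y \<in> S \<Longrightarrow> x \<in> S \<Longrightarrow> continuous (at t) (\<lambda>s. X s y x)"
  shows "dominated S T (\<lambda>_. 1) X"
proof (cases "0 \<le> T")
  case True
  let ?size = "\<lambda>t. \<Sum>y\<in>S. \<Sum>x\<in>S. cmod (X t y x)"
  have "continuous_on {-T..T} ?size"
    by (intro continuous_at_imp_continuous_on ballI continuous_sum continuous_norm assms(2))
  then obtain t0 where t0: "\<forall>t\<in>{-T..T}. ?size t \<le> ?size t0"
    using continuous_attains_sup[of "{-T..T}" ?size] True by auto
  have "cmod (X t y x) \<le> ?size t0 * 1" if t: "t \<in> {-T..T}" and y: "y \<in> S" and x: "x \<in> S" for t y x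
  proof -
    have "cmod (X t y x) \<le> (\<Sum>x\<in>S. cmod (X t y x))" by (rule member_le_sum[OF x]) (auto simp: assms)
    also have "\<dots> \<le> ?size t" by (rule member_le_sum[OF y]) (auto intro!: sum_nonneg simp: assms)
    also have "\<dots> \<le> ?size t0" using t0 t by blast
    finally show ?thesis by simp
  qed
  then show ?thesis unfolding dominated_def by blast
qed (auto simp: dominated_def)


section \<open>The Dirac deformation preserves \<open>D\<^sup>* = D\<close>, the tridiagonal shape and \<open>D\<^sup>2 = L\<close>\<close>

locale dirac_flow =
  fixes S :: "'v::linorder set set" and \<beta> :: real and D :: "real \<Rightarrow> 'v op"
  assumes finite_S: "finite S"
    and blockdiag_L: "blockdiag (Laplacian S)"
    and initial: "\<forall>y\<in>S. \<forall>x\<in>S. D 0 y x = Dirac0 S y x"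
    and flow: "\<forall>t. \<forall>y\<in>S. \<forall>x\<in>S.
       ((\<lambda>s. D s y x) has_vector_derivative
          msub (mmul S (Bop \<beta> (D t)) (D t)) (mmul S (D t) (Bop \<beta> (D t))) y x) (at t)"
begin

abbreviation "L \<equiv> Laplacian S"

definition "B t = Bop \<beta> (D t)"
definition "D' t = mcomm S (B t) (D t)"

lemma has_vector_derivative_D:
  "\<forall>y\<in>S. \<forall>x\<in>S. ((\<lambda>s. D s y x) has_vector_derivative D' t y x) (at t)"
  using flow by (simp add: D'_def B_def mcomm_def)

definition "herm_defect t = msub (D t) (adj (D t))"
definition "band_defect t = offtridiag (D t)"
definition "comm_defect t = mcomm S (D t) L"
definition "square_defect t = msub (mmul S (D t) (D t)) L"

definition "defect t = frob_sq S (herm_defect t) + frob_sq S (band_defect t)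
  + frob_sq S (comm_defect t) + frob_sq S (square_defect t)"

definition "defect' t = 2 * frob_inner S (herm_defect t) (msub (D' t) (adj (D' t)))
  + 2 * frob_inner S (band_defect t) (offtridiag (D' t))
  + 2 * frob_inner S (comm_defect t) (mcomm S (D' t) L)
  + 2 * frob_inner S (square_defect t) (madd (mmul S (D' t) (D t)) (mmul S (D t) (D' t)))"

lemma has_real_derivative_defect: "(defect has_real_derivative defect' t) (at t)"
proof -
  note D = has_vector_derivative_D[of t]
  have L: "\<forall>y\<in>S. \<forall>x\<in>S. ((\<lambda>s. L y x) has_vector_derivative 0) (at t)" by simp
  have "\<forall>y\<in>S. \<forall>x\<in>S. ((\<lambda>s. herm_defect s y x) has_vector_derivative msub (D' t) (adj (D' t)) y x) (at t)"
    unfolding herm_defect_def msub_def adj_def using D by (auto intro!: derivative_intros)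
  moreover have "\<forall>y\<in>S. \<forall>x\<in>S. ((\<lambda>s. band_defect s y x) has_vector_derivative offtridiag (D' t) y x) (at t)"
    unfolding band_defect_def offtridiag_def using D by (auto intro!: derivative_intros)
  moreover have "\<forall>y\<in>S. \<forall>x\<in>S. ((\<lambda>s. comm_defect s y x) has_vector_derivative mcomm S (D' t) L y x) (at t)"
  proof (intro ballI)
    fix y x assume "y \<in> S" "x \<in> S"
    then have "((\<lambda>s. mmul S (D s) L y x) has_vector_derivative mmul S (D' t) L y x) (at t)"
      "((\<lambda>s. mmul S L (D s) y x) has_vector_derivative mmul S L (D' t) y x) (at t)"
      using has_vector_derivative_mmul[OF D L] has_vector_derivative_mmul[OF L D]
      by (simp_all add: mmul_def)
    then show "((\<lambda>s. comm_defect s y x) has_vector_derivative mcomm S (D' t) L y x) (at t)"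
      unfolding comm_defect_def mcomm_def msub_def by (rule has_vector_derivative_diff)
  qed
  moreover have "\<forall>y\<in>S. \<forall>x\<in>S. ((\<lambda>s. square_defect s y x) has_vector_derivative
      madd (mmul S (D' t) (D t)) (mmul S (D t) (D' t)) y x) (at t)"
    unfolding square_defect_def msub_def madd_def
    by (auto intro!: has_vector_derivative_eq_rhs[OF has_vector_derivative_diff]
        has_vector_derivative_mmul[OF D D])
  ultimately show ?thesis
    unfolding defect_def[abs_def] defect'_def
    by (intro DERIV_add has_real_derivative_frob_sq)
qed

lemma defect_nonneg: "0 \<le> defect t"
  unfolding defect_def by (intro add_nonneg_nonneg frob_sq_nonneg)

lemma frob_sq_defects_le:
  "frob_sq S (herm_defect t) \<le> defect t" "frob_sq S (band_defect t) \<le> defect t"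
  "frob_sq S (comm_defect t) \<le> defect t" "frob_sq S (square_defect t) \<le> defect t"
  using frob_sq_nonneg[of S "herm_defect t"] frob_sq_nonneg[of S "band_defect t"]
    frob_sq_nonneg[of S "comm_defect t"] frob_sq_nonneg[of S "square_defect t"]
  unfolding defect_def by linarith+

lemma defect_entries_le:
  "\<forall>y\<in>S. \<forall>x\<in>S. cmod (herm_defect t y x) \<le> sqrt (defect t)"
  "\<forall>y\<in>S. \<forall>x\<in>S. cmod (band_defect t y x) \<le> sqrt (defect t)"
  "\<forall>y\<in>S. \<forall>x\<in>S. cmod (comm_defect t y x) \<le> sqrt (defect t)"
  "\<forall>y\<in>S. \<forall>x\<in>S. cmod (square_defect t y x) \<le> sqrt (defect t)"
  by (intro entries_le_sqrt_if_frob_sq_le finite_S frob_sq_defects_le)+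

lemma dominated_defects:
  "dominated S T (\<lambda>t. sqrt (defect t)) herm_defect" "dominated S T (\<lambda>t. sqrt (defect t)) band_defect"
  "dominated S T (\<lambda>t. sqrt (defect t)) comm_defect" "dominated S T (\<lambda>t. sqrt (defect t)) square_defect"
  unfolding dominated_def by (intro exI[of _ 1], simp add: defect_entries_le)+

text \<open>The derivatives of the four defects are linear in the defects, with coefficients built from
  \<open>B\<close> and \<open>D\<close>; this is what makes Gronwall's inequality applicable.\<close>

lemma adj_B: "adj (B t) = msub (mscale (\<i> * of_real \<beta>) (bpart (herm_defect t))) (B t)"
  unfolding B_def Bop_def adj_def herm_defect_def msub_def mscale_def bpart_def dpart_def
  by (auto simp: fun_eq_iff algebra_simps)

lemma herm_defect_derivative:
  "msub (D' t) (adj (D' t)) =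
     madd (madd (mcomm S (mscale (\<i> * of_real \<beta>) (bpart (herm_defect t))) (D t))
                (mcomm S (B t) (herm_defect t)))
          (mcomm S (herm_defect t) (mscale (\<i> * of_real \<beta>) (bpart (herm_defect t))))"
proof -
  define X where "X = mscale (\<i> * of_real \<beta>) (bpart (herm_defect t))"
  have "adj (D t) = msub (D t) (herm_defect t)"
    by (simp add: herm_defect_def msub_def fun_eq_iff)
  then have "adj (D' t) = mcomm S (msub (D t) (herm_defect t)) (msub X (B t))"
    by (simp add: D'_def adj_mcomm adj_B X_def)
  then show ?thesis
    unfolding X_def[symmetric] D'_def mcomm_def mmul_msub_left mmul_msub_right
    by (simp add: msub_def madd_def fun_eq_iff)
qed

lemma band_defect_derivative:
  "offtridiag (D' t) = offtridiag (mcomm S (B t) (madd (dstarpart (herm_defect t)) (band_defect t)))"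
proof -
  have "D' t y x = mcomm S (B t) (madd (dstarpart (herm_defect t)) (band_defect t)) y x"
    if far: "\<not> (card y = card x \<or> card y = card x + 1 \<or> card x = card y + 1)" for y x
    unfolding D'_def mcomm_def msub_def mmul_def sum_subtractf[symmetric]
    by (rule sum.cong[OF refl])
       (use far in \<open>auto simp: B_def Bop_def madd_def dstarpart_def herm_defect_def band_defect_def
          offtridiag_def msub_def adj_def dpart_def bpart_def algebra_simps\<close>)
  then show ?thesis by (auto simp: offtridiag_def fun_eq_iff)
qed

lemma comm_defect_derivative:
  "mcomm S (D' t) L = madd (mcomm S (B t) (comm_defect t)) (mcomm S (mcomm S (B t) L) (D t))"
  unfolding D'_def comm_defect_def by (rule mcomm_jacobi)

lemma square_defect_derivative:
  "madd (mmul S (D' t) (D t)) (mmul S (D t) (D' t)) =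
     madd (mcomm S (B t) (square_defect t)) (mcomm S (B t) L)"
  unfolding D'_def square_defect_def mcomm_def mmul_msub_left mmul_msub_right mmul_assoc
  by (simp add: msub_def madd_def fun_eq_iff)

lemma mcomm_B_L:
  "mcomm S (B t) L = madd (madd (dpart (comm_defect t)) (adj (dpart (comm_defect t))))
     (mscale (\<i> * of_real \<beta>) (bpart (comm_defect t)))"
  unfolding B_def comm_defect_def by (rule mcomm_Bop_blockdiag[OF blockdiag_L adj_Laplacian])

lemma bounded_D: "dominated S T (\<lambda>_. 1) D"
  using has_vector_derivative_D
  by (intro dominated_one_if_continuous finite_S) (meson has_vector_derivative_continuous)

lemma bounded_B: "dominated S T (\<lambda>_. 1) B"
  unfolding B_def[abs_def] Bop_eq
  by (intro dominated_madd dominated_msub dominated_mscale dominated_adj dominated_dpart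
      dominated_bpart bounded_D)

lemma bounded_herm_defect: "dominated S T (\<lambda>_. 1) herm_defect"
  unfolding herm_defect_def[abs_def] by (intro dominated_msub dominated_adj bounded_D)

lemma defect_derivatives_dominated:
  fixes T :: real
  defines "w \<equiv> \<lambda>t. sqrt (defect t)"
  shows "dominated S T w (\<lambda>t. msub (D' t) (adj (D' t)))"
    and "dominated S T w (\<lambda>t. offtridiag (D' t))"
    and "dominated S T w (\<lambda>t. mcomm S (D' t) L)"
    and "dominated S T w (\<lambda>t. madd (mmul S (D' t) (D t)) (mmul S (D t) (D' t)))"
proof -
  note D = dominated_defects[of T, folded w_def]
  have BL: "dominated S T w (\<lambda>t. mcomm S (B t) L)"
    unfolding mcomm_B_L
    by (intro dominated_madd dominated_adj dominated_mscale dominated_dpart dominated_bpart D)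
  show "dominated S T w (\<lambda>t. msub (D' t) (adj (D' t)))"
    unfolding herm_defect_derivative
    by (intro dominated_madd dominated_mcomm_bounded_right dominated_mcomm_bounded_left
        dominated_mscale dominated_bpart D bounded_D bounded_B bounded_herm_defect)
  show "dominated S T w (\<lambda>t. offtridiag (D' t))"
    unfolding band_defect_derivative
    by (intro dominated_offtridiag dominated_mcomm_bounded_left dominated_madd
        dominated_dstarpart D bounded_B)
  show "dominated S T w (\<lambda>t. mcomm S (D' t) L)"
    unfolding comm_defect_derivative
    by (intro dominated_madd dominated_mcomm_bounded_left dominated_mcomm_bounded_right
        BL D bounded_B bounded_D)
  show "dominated S T w (\<lambda>t. madd (mmul S (D' t) (D t)) (mmul S (D t) (D' t)))"
    unfolding square_defect_derivative
    by (intro dominated_madd dominated_mcomm_bounded_left BL D bounded_B)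
qed

lemma defect'_bound: "\<exists>K. \<forall>t\<in>{-T..T}. \<bar>defect' t\<bar> \<le> K * defect t"
proof -
  obtain K1 where K1:
    "\<forall>t\<in>{-T..T}. \<bar>frob_inner S (herm_defect t) (msub (D' t) (adj (D' t)))\<bar> \<le> K1 * defect t"
    using abs_frob_inner_dominated[OF defect_nonneg defect_entries_le(1) defect_derivatives_dominated(1)]
    by blast
  obtain K2 where K2:
    "\<forall>t\<in>{-T..T}. \<bar>frob_inner S (band_defect t) (offtridiag (D' t))\<bar> \<le> K2 * defect t"
    using abs_frob_inner_dominated[OF defect_nonneg defect_entries_le(2) defect_derivatives_dominated(2)]
    by blast
  obtain K3 where K3:
    "\<forall>t\<in>{-T..T}. \<bar>frob_inner S (comm_defect t) (mcomm S (D' t) L)\<bar> \<le> K3 * defect t"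
    using abs_frob_inner_dominated[OF defect_nonneg defect_entries_le(3) defect_derivatives_dominated(3)]
    by blast
  obtain K4 where K4: "\<forall>t\<in>{-T..T}. \<bar>frob_inner S (square_defect t)
      (madd (mmul S (D' t) (D t)) (mmul S (D t) (D' t)))\<bar> \<le> K4 * defect t"
    using abs_frob_inner_dominated[OF defect_nonneg defect_entries_le(4) defect_derivatives_dominated(4)]
    by blast
  have "\<bar>defect' t\<bar> \<le> (2 * (K1 + K2 + K3 + K4)) * defect t" if t: "t \<in> {-T..T}" for t
    using K1[rule_format, OF t] K2[rule_format, OF t] K3[rule_format, OF t] K4[rule_format, OF t]
    unfolding defect'_def distrib_right distrib_left by linarith
  then show ?thesis by blast
qed

lemma defect_initial: "defect 0 = 0"
proof -
  have "herm_defect 0 y x = 0 \<and> band_defect 0 y x = 0 \<and> comm_defect 0 y x = 0 \<and> square_defect 0 y x = 0"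
    if y: "y \<in> S" and x: "x \<in> S" for y x
  proof -
    have D0: "D 0 y x = Dirac0 S y x" "D 0 x y = Dirac0 S x y" using initial y x by auto
    have "Dirac0 S y x = cnj (Dirac0 S x y)"
      using fun_cong[OF fun_cong[OF adj_Dirac0[of S]], of y x] by (simp add: adj_def)
    then have "herm_defect 0 y x = 0" by (simp add: herm_defect_def msub_def adj_def D0)
    moreover have "band_defect 0 y x = 0"
      by (auto simp: band_defect_def offtridiag_def D0 Dirac0_def madd_def adj_def d0_def)
    moreover have "mmul S (D 0) C y x = mmul S (Dirac0 S) C y x"
      "mmul S C (D 0) y x = mmul S C (Dirac0 S) y x" for C
      by (rule mmul_cong; use initial y x in auto)+
    then have "comm_defect 0 y x = mmul S (Dirac0 S) L y x - mmul S L (Dirac0 S) y x"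
      "square_defect 0 y x = mmul S (Dirac0 S) (Dirac0 S) y x - L y x"
      by (simp_all add: comm_defect_def square_defect_def mcomm_def msub_def)
    then have "comm_defect 0 y x = 0" "square_defect 0 y x = 0"
      by (simp_all add: Laplacian_def mmul_assoc)
    ultimately show ?thesis by simp
  qed
  then show ?thesis by (simp add: defect_def frob_sq_def)
qed

lemma defect_vanishes: "defect t = 0"
proof -
  obtain K where "\<forall>s\<in>{-\<bar>t\<bar>..\<bar>t\<bar>}. \<bar>defect' s\<bar> \<le> K * defect s"
    using defect'_bound by blast
  then have "\<And>s. \<bar>s\<bar> \<le> \<bar>t\<bar> \<Longrightarrow> \<bar>defect' s\<bar> \<le> K * defect s" by (auto simp: abs_le_iff)
  then show ?thesis
    by (rule gronwall_vanishing[OF has_real_derivative_defect defect_nonneg defect_initial])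
qed

lemma defects_vanish:
  assumes "y \<in> S" "x \<in> S"
  shows "herm_defect t y x = 0" "band_defect t y x = 0" "square_defect t y x = 0"
  using defect_entries_le(1,2,4)[of t] assms by (simp_all add: defect_vanishes)

lemma D_selfadjoint:
  assumes "y \<in> S" "x \<in> S" shows "D t y x = cnj (D t x y)"
  using defects_vanish(1)[OF assms, of t] by (simp add: herm_defect_def msub_def adj_def)

lemma D_offtridiag:
  assumes "y \<in> S" "x \<in> S" shows "offtridiag (D t) y x = 0"
  using defects_vanish(2)[OF assms, of t] by (simp add: band_defect_def)

lemma D_squared:
  assumes "y \<in> S" "x \<in> S" shows "mmul S (D t) (D t) y x = L y x"
  using defects_vanish(3)[OF assms, of t] by (simp add: square_defect_def msub_def)

end


section \<open>Decay of \<open>d\<close> and convergence of \<open>b\<close>\<close>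

context dirac_flow
begin

lemma frob_sq_D: "frob_sq S (D t) = Re (\<Sum>y\<in>S. L y y)"
proof -
  have "frob_sq S (D t) = (\<Sum>y\<in>S. \<Sum>x\<in>S. Re (D t y x * D t x y))"
    unfolding frob_sq_def
  proof (intro sum.cong refl)
    fix y x assume "y \<in> S" "x \<in> S"
    then have "D t x y = cnj (D t y x)" by (intro D_selfadjoint)
    then show "(cmod (D t y x))\<^sup>2 = Re (D t y x * D t x y)"
      using arg_cong[OF complex_norm_square[of "D t y x"], of Re] by simp
  qed
  also have "\<dots> = Re (\<Sum>y\<in>S. mmul S (D t) (D t) y y)" by (simp add: mmul_def)
  also have "\<dots> = Re (\<Sum>y\<in>S. L y y)" using D_squared by (simp cong: sum.cong)
  finally show ?thesis .
qed

definition "D_bound = sqrt (Re (\<Sum>y\<in>S. L y y))"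

lemma D_bound_nonneg: "0 \<le> D_bound"
  using frob_sq_D[of 0] frob_sq_nonneg[of S "D 0"] by (simp add: D_bound_def)

lemma norm_D_le: "y \<in> S \<Longrightarrow> x \<in> S \<Longrightarrow> cmod (D t y x) \<le> D_bound"
  unfolding D_bound_def frob_sq_D[of t, symmetric] by (rule entry_le_sqrt_frob_sq[OF finite_S])

lemma norm_B_le: "y \<in> S \<Longrightarrow> x \<in> S \<Longrightarrow> cmod (B t y x) \<le> (2 + \<bar>\<beta>\<bar>) * D_bound"
proof -
  assume y: "y \<in> S" and x: "x \<in> S"
  have "cmod (dpart (D t) y x) \<le> D_bound" "cmod (cnj (dpart (D t) x y)) \<le> D_bound" "cmod (bpart (D t) y x) \<le> D_bound"
    using norm_D_le[OF y x] norm_D_le[OF x y] D_bound_nonneg by (auto simp: dpart_def bpart_def)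
  moreover from this(3) have "cmod (\<i> * complex_of_real \<beta> * bpart (D t) y x) \<le> \<bar>\<beta>\<bar> * D_bound"
    by (simp add: norm_mult mult_left_mono)
  moreover have "cmod (B t y x) \<le> cmod (dpart (D t) y x) + cmod (cnj (dpart (D t) x y))
      + cmod (\<i> * complex_of_real \<beta> * bpart (D t) y x)"
    unfolding B_def Bop_def adj_def
    by (rule order.trans[OF norm_triangle_ineq add_mono[OF norm_triangle_ineq4 order_refl]])
  ultimately have "cmod (B t y x) \<le> D_bound + D_bound + \<bar>\<beta>\<bar> * D_bound" by linarith
  then show ?thesis by (simp add: algebra_simps)
qed

lemma norm_D'_le: "y \<in> S \<Longrightarrow> x \<in> S \<Longrightarrow> cmod (D' t y x) \<le> 2 * real (card S) * ((2 + \<bar>\<beta>\<bar>) * D_bound) * D_bound"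
proof -
  assume y: "y \<in> S" and x: "x \<in> S"
  have "cmod (B t y z) * cmod (D t z x) \<le> (2 + \<bar>\<beta>\<bar>) * D_bound * D_bound"
    "cmod (D t y z) * cmod (B t z x) \<le> (2 + \<bar>\<beta>\<bar>) * D_bound * D_bound" if z: "z \<in> S" for z
  proof -
    have "0 \<le> (2 + \<bar>\<beta>\<bar>) * D_bound" using D_bound_nonneg by simp
    then show "cmod (B t y z) * cmod (D t z x) \<le> (2 + \<bar>\<beta>\<bar>) * D_bound * D_bound"
      using norm_B_le[OF y z] norm_D_le[OF z x] by (intro mult_mono) auto
    have "cmod (D t y z) * cmod (B t z x) \<le> D_bound * ((2 + \<bar>\<beta>\<bar>) * D_bound)"
      using norm_D_le[OF y z] norm_B_le[OF z x] D_bound_nonneg by (intro mult_mono) auto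
    then show "cmod (D t y z) * cmod (B t z x) \<le> (2 + \<bar>\<beta>\<bar>) * D_bound * D_bound"
      by (simp add: mult_ac)
  qed
  then have "cmod (mmul S (B t) (D t) y x) \<le> real (card S) * ((2 + \<bar>\<beta>\<bar>) * D_bound * D_bound)"
    "cmod (mmul S (D t) (B t) y x) \<le> real (card S) * ((2 + \<bar>\<beta>\<bar>) * D_bound * D_bound)"
    by (blast intro: cmod_mmul_le_card)+
  then have "cmod (mmul S (B t) (D t) y x - mmul S (D t) (B t) y x)
      \<le> 2 * real (card S) * ((2 + \<bar>\<beta>\<bar>) * D_bound * D_bound)"
    using norm_triangle_ineq4[of "mmul S (B t) (D t) y x" "mmul S (D t) (B t) y x"] by linarith
  then show ?thesis by (simp add: D'_def mcomm_def msub_def mult.assoc)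
qed

text \<open>On the diagonal blocks \<open>D' = [B, D]\<close> only sees \<open>d\<close>: with \<open>D = d + d\<^sup>* + b\<close> and
  \<open>B = d - d\<^sup>* + i\<beta> b\<close>, the block-diagonal part of \<open>[B, D]\<close> is \<open>2 (d d\<^sup>* - d\<^sup>* d)\<close>.\<close>
lemma D'_diagonal_block:
  assumes y: "y \<in> S" and x: "x \<in> S" and c: "card y = card x"
  shows "D' t y x = 2 * (\<Sum>z\<in>S. dpart (D t) y z * cnj (dpart (D t) x z) - cnj (dpart (D t) z y) * dpart (D t) z x)"
  unfolding D'_def mcomm_def msub_def mmul_def sum_subtractf[symmetric] sum_distrib_left
proof (rule sum.cong[OF refl])
  fix z assume z: "z \<in> S"
  note h = D_selfadjoint[OF z x, of t] D_selfadjoint[OF y z, of t]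
  note o = D_offtridiag[OF y z, of t] D_offtridiag[OF z x, of t]
  consider (up) "card y = card z + 1" | (down) "card z = card y + 1" | (same) "card y = card z"
    | (far) "card y \<noteq> card z" "card y \<noteq> card z + 1" "card z \<noteq> card y + 1" by linarith
  then show "B t y z * D t z x - D t y z * B t z x =
    2 * (dpart (D t) y z * cnj (dpart (D t) x z) - cnj (dpart (D t) z y) * dpart (D t) z x)"
  proof cases
    case up
    then show ?thesis using c unfolding B_def Bop_def dpart_def bpart_def adj_def by (simp add: h(1))
  next
    case down
    then show ?thesis using c unfolding B_def Bop_def dpart_def bpart_def adj_def by (simp add: h(2))
  next
    case same
    then show ?thesis using c unfolding B_def Bop_def dpart_def bpart_def adj_def by simp
  next
    case far
    then have "D t y z = 0" "D t z x = 0" using o c unfolding offtridiag_def by auto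
    then show ?thesis using far c unfolding B_def Bop_def dpart_def bpart_def adj_def by simp
  qed
qed

definition "dnorm_sq t = frob_sq S (dpart (D t))"

definition "weighted_trace t = (\<Sum>y\<in>S. real (card y) * Re (D t y y))"

lemma has_real_derivative_weighted_trace: "(weighted_trace has_real_derivative 2 * dnorm_sq t) (at t)"
proof -
  have "(weighted_trace has_real_derivative (\<Sum>y\<in>S. real (card y) * Re (D' t y y))) (at t)"
    unfolding weighted_trace_def[abs_def] using has_vector_derivative_D
    by (auto intro!: derivative_eq_intros simp: mult.commute)
  moreover
  let ?d = "\<lambda>y z. (cmod (dpart (D t) y z))\<^sup>2"
  have "Re (D' t y y) = 2 * (\<Sum>z\<in>S. ?d y z - ?d z y)" if "y \<in> S" for y
  proof -
    have "Re (a * cnj a) = (cmod a)\<^sup>2" for a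
      using arg_cong[OF complex_norm_square[of a], of Re] by simp
    then show ?thesis using D'_diagonal_block[OF that that refl, of t] by (simp add: mult.commute)
  qed
  then have "(\<Sum>y\<in>S. real (card y) * Re (D' t y y))
      = 2 * (\<Sum>y\<in>S. \<Sum>z\<in>S. real (card y) * ?d y z - real (card y) * ?d z y)"
    by (simp add: sum_distrib_left right_diff_distrib) (simp add: algebra_simps)
  also have "\<dots> = 2 * ((\<Sum>y\<in>S. \<Sum>z\<in>S. real (card y) * ?d y z) - (\<Sum>y\<in>S. \<Sum>z\<in>S. real (card y) * ?d z y))"
    by (simp add: sum_subtractf)
  also have "(\<Sum>y\<in>S. \<Sum>z\<in>S. real (card y) * ?d z y) = (\<Sum>y\<in>S. \<Sum>z\<in>S. real (card z) * ?d y z)"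
    by (rule sum.swap)
  also have "(\<Sum>y\<in>S. \<Sum>z\<in>S. real (card y) * ?d y z) - (\<Sum>y\<in>S. \<Sum>z\<in>S. real (card z) * ?d y z) = dnorm_sq t"
    unfolding dnorm_sq_def frob_sq_def sum_subtractf[symmetric]
    by (intro sum.cong refl) (auto simp: dpart_def algebra_simps)
  finally show ?thesis by simp
qed

lemma abs_weighted_trace_le: "\<bar>weighted_trace t\<bar> \<le> (\<Sum>y\<in>S. real (card y) * D_bound)"
  unfolding weighted_trace_def
proof (rule order.trans[OF sum_abs], rule sum_mono)
  fix y assume y: "y \<in> S"
  have "\<bar>Re (D t y y)\<bar> \<le> D_bound" using abs_Re_le_cmod norm_D_le[OF y y] by (rule order.trans)
  then show "\<bar>real (card y) * Re (D t y y)\<bar> \<le> real (card y) * D_bound"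
    by (simp add: abs_mult mult_left_mono)
qed

lemma dnorm_sq_lipschitz: "\<exists>C. \<forall>s t. \<bar>dnorm_sq s - dnorm_sq t\<bar> \<le> C * \<bar>s - t\<bar>"
proof -
  define M where "M = 2 * real (card S) * ((2 + \<bar>\<beta>\<bar>) * D_bound) * D_bound"
  have "((\<lambda>s. dpart (D s) y z) has_vector_derivative dpart (D' t) y z) (at t)"
    if "y \<in> S" "z \<in> S" for y z t
    unfolding dpart_def using has_vector_derivative_D that by auto
  then have "(dnorm_sq has_real_derivative 2 * frob_inner S (dpart (D t)) (dpart (D' t))) (at t)" for t
    unfolding dnorm_sq_def[abs_def] by (intro has_real_derivative_frob_sq) auto
  moreover have "\<bar>2 * frob_inner S (dpart (D t)) (dpart (D' t))\<bar>
      \<le> 2 * (real (card S) * real (card S) * (D_bound * M))" for t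
  proof -
    have "0 \<le> M" using D_bound_nonneg by (simp add: M_def)
    then have "\<forall>y\<in>S. \<forall>x\<in>S. cmod (dpart (D t) y x) \<le> D_bound" "\<forall>y\<in>S. \<forall>x\<in>S. cmod (dpart (D' t) y x) \<le> M"
      using norm_D_le norm_D'_le D_bound_nonneg by (simp_all add: dpart_def M_def)
    then have "\<bar>frob_inner S (dpart (D t)) (dpart (D' t))\<bar> \<le> real (card S) * real (card S) * (D_bound * M)"
      by (rule abs_frob_inner_le)
    then show ?thesis by simp
  qed
  ultimately have "\<bar>dnorm_sq s - dnorm_sq t\<bar> \<le> 2 * (real (card S) * real (card S) * (D_bound * M)) * \<bar>s - t\<bar>"
    for s t by (rule lipschitz_if_bounded_derivative)
  then show ?thesis by blast
qed

lemma dnorm_sq_tendsto_zero: "(dnorm_sq \<longlongrightarrow> 0) at_infinity"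
proof -
  obtain C where "\<And>s t. \<bar>dnorm_sq s - dnorm_sq t\<bar> \<le> C * \<bar>s - t\<bar>" using dnorm_sq_lipschitz by blast
  moreover have "((\<lambda>t. weighted_trace t / 2) has_real_derivative dnorm_sq t) (at t)" for t
    using has_real_derivative_weighted_trace[of t] by (auto intro!: derivative_eq_intros)
  moreover have "\<bar>weighted_trace t / 2\<bar> \<le> (\<Sum>y\<in>S. real (card y) * D_bound)" for t
    using abs_weighted_trace_le[of t] D_bound_nonneg by (auto intro: order.trans[of _ "\<bar>weighted_trace t\<bar>"] sum_nonneg)
  ultimately show ?thesis
    by (intro barbalat_at_infinity[of "\<lambda>t. weighted_trace t / 2" dnorm_sq]) (auto simp: dnorm_sq_def frob_sq_nonneg)
qed

lemma norm_D'_diagonal_block_le: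
  assumes y: "y \<in> S" and x: "x \<in> S" and c: "card y = card x"
  shows "cmod (D' t y x) \<le> 4 * dnorm_sq t"
proof -
  let ?d = "dpart (D t)"
  have "cmod (D' t y x) \<le> 2 * (\<Sum>z\<in>S. cmod (?d y z * cnj (?d x z) - cnj (?d z y) * ?d z x))"
    unfolding D'_diagonal_block[OF y x c] by (simp add: norm_mult norm_sum)
  also have "\<dots> \<le> 2 * (\<Sum>z\<in>S. ((cmod (?d y z))\<^sup>2 + (cmod (?d x z))\<^sup>2) / 2
      + ((cmod (?d z y))\<^sup>2 + (cmod (?d z x))\<^sup>2) / 2)"
  proof (intro mult_left_mono sum_mono)
    fix z
    have ab: "a * b \<le> (a\<^sup>2 + b\<^sup>2) / 2" for a b :: real
      using sum_squares_bound[of a b] by simp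
    have "cmod (?d y z * cnj (?d x z) - cnj (?d z y) * ?d z x)
        \<le> cmod (?d y z) * cmod (?d x z) + cmod (?d z y) * cmod (?d z x)"
      by (rule order.trans[OF norm_triangle_ineq4]) (simp add: norm_mult)
    also have "\<dots> \<le> ((cmod (?d y z))\<^sup>2 + (cmod (?d x z))\<^sup>2) / 2 + ((cmod (?d z y))\<^sup>2 + (cmod (?d z x))\<^sup>2) / 2"
      by (intro add_mono ab)
    finally show "cmod (?d y z * cnj (?d x z) - cnj (?d z y) * ?d z x) \<le> \<dots>" .
  qed simp
  also have "\<dots> = (\<Sum>z\<in>S. (cmod (?d y z))\<^sup>2) + (\<Sum>z\<in>S. (cmod (?d x z))\<^sup>2)
      + (\<Sum>z\<in>S. (cmod (?d z y))\<^sup>2) + (\<Sum>z\<in>S. (cmod (?d z x))\<^sup>2)"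
    by (simp add: sum.distrib sum_divide_distrib[symmetric] algebra_simps) (simp add: field_simps)
  also have "\<dots> \<le> 4 * dnorm_sq t"
    using row_le_frob_sq[OF finite_S y, of ?d] row_le_frob_sq[OF finite_S x, of ?d]
      column_le_frob_sq[OF finite_S y, of ?d] column_le_frob_sq[OF finite_S x, of ?d]
    unfolding dnorm_sq_def by linarith
  finally show ?thesis .
qed

lemma diagonal_block_limit:
  assumes y: "y \<in> S" and x: "x \<in> S" and c: "card y = card x" and F: "F = at_top \<or> F = at_bot"
  shows "\<exists>l. ((\<lambda>t. D t y x) \<longlongrightarrow> l) F"
proof (rule complex_limit_if_derivative_dominated[OF _ _ _ _ _ F])
  show "((\<lambda>t. D t y x) has_vector_derivative D' t y x) (at t)" for t
    using has_vector_derivative_D y x by blast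
  show "((\<lambda>t. 2 * weighted_trace t) has_real_derivative 4 * dnorm_sq t) (at t)" for t
    using has_real_derivative_weighted_trace by (auto intro!: derivative_eq_intros)
  show "cmod (D' t y x) \<le> 4 * dnorm_sq t" for t by (rule norm_D'_diagonal_block_le[OF y x c])
  show "cmod (D t y x) \<le> D_bound" for t by (rule norm_D_le[OF y x])
  show "\<bar>2 * weighted_trace t\<bar> \<le> 2 * (\<Sum>y\<in>S. real (card y) * D_bound)" for t
    using abs_weighted_trace_le[of t] by (simp add: abs_mult)
qed

lemma offdiagonal_block_tendsto_zero:
  assumes y: "y \<in> S" and x: "x \<in> S" and c: "card y \<noteq> card x" and F: "F \<le> at_infinity"
  shows "((\<lambda>t. D t y x) \<longlongrightarrow> 0) F"
proof -
  have "((\<lambda>t. sqrt (dnorm_sq t)) \<longlongrightarrow> 0) F"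
    using tendsto_real_sqrt[OF tendsto_mono[OF F dnorm_sq_tendsto_zero]] by simp
  then have d: "((\<lambda>t. D t y' x') \<longlongrightarrow> 0) F"
    if "y' \<in> S" "x' \<in> S" "card y' = card x' + 1" for y' x'
  proof (rule Lim_null_comparison[rotated], intro always_eventually allI)
    fix t
    show "norm (D t y' x') \<le> sqrt (dnorm_sq t)"
      using entry_le_sqrt_frob_sq[OF finite_S that(1,2), of "dpart (D t)"] that(3)
      by (simp add: dnorm_sq_def dpart_def)
  qed
  consider "card y = card x + 1" | "card x = card y + 1"
    | "\<not> (card y = card x \<or> card y = card x + 1 \<or> card x = card y + 1)"
    using c by linarith
  then show ?thesis
  proof cases
    case 2
    have "((\<lambda>t. cnj (D t x y)) \<longlongrightarrow> cnj 0) F" by (intro tendsto_cnj d[OF x y 2])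
    then show ?thesis using D_selfadjoint[OF y x] by simp
  next
    case 3
    then show ?thesis using D_offtridiag[OF y x] by (simp add: offtridiag_def)
  qed (use d y x in blast)
qed

definition "binf F y x = (if card y = card x then Lim F (\<lambda>t. D t y x) else 0)"

lemma tendsto_binf:
  assumes F: "F = at_top \<or> F = at_bot" and y: "y \<in> S" and x: "x \<in> S"
  shows "((\<lambda>t. D t y x) \<longlongrightarrow> binf F y x) F"
proof (cases "card y = card x")
  case True
  then obtain l where l: "((\<lambda>t. D t y x) \<longlongrightarrow> l) F" using diagonal_block_limit[OF y x _ F] by blast
  moreover have "F \<noteq> bot"
    using F trivial_limit_at_top_linorder trivial_limit_at_bot_linorder by (auto simp: trivial_limit_def)
  then have "Lim F (\<lambda>t. D t y x) = l" using l by (intro tendsto_Lim) auto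
  ultimately show ?thesis using True by (simp add: binf_def)
next
  case False
  have "F \<le> at_infinity" using F at_top_le_at_infinity at_bot_le_at_infinity by auto
  then show ?thesis using offdiagonal_block_tendsto_zero[OF y x False] False by (simp add: binf_def)
qed

lemma bpart_tendsto_binf:
  assumes F: "F = at_top \<or> F = at_bot"
  shows "((\<lambda>t. opnorm S (msub (bpart (D t)) (binf F))) \<longlongrightarrow> 0) F"
proof (intro tendsto_opnorm_zero tendsto_frob_sq_zero ballI)
  fix y x assume y: "y \<in> S" and x: "x \<in> S"
  show "((\<lambda>t. msub (bpart (D t)) (binf F) y x) \<longlongrightarrow> 0) F"
  proof (cases "card y = card x")
    case True
    have "((\<lambda>t. D t y x - binf F y x) \<longlongrightarrow> binf F y x - binf F y x) F"
      by (intro tendsto_diff tendsto_binf[OF F y x] tendsto_const)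
    then show ?thesis using True by (simp add: msub_def bpart_def)
  qed (simp add: msub_def bpart_def binf_def)
qed

lemma binf_squared:
  assumes F: "F = at_top \<or> F = at_bot" and y: "y \<in> S" and x: "x \<in> S"
  shows "mmul S (binf F) (binf F) y x = L y x"
proof -
  have "((\<lambda>t. mmul S (D t) (D t) y x) \<longlongrightarrow> mmul S (binf F) (binf F) y x) F"
    unfolding mmul_def using y x by (intro tendsto_sum tendsto_mult tendsto_binf[OF F]) auto
  then have "((\<lambda>t. L y x) \<longlongrightarrow> mmul S (binf F) (binf F) y x) F" using D_squared[OF y x] by simp
  moreover have "F \<noteq> bot"
    using F trivial_limit_at_top_linorder trivial_limit_at_bot_linorder by (auto simp: trivial_limit_def)
  ultimately show ?thesis using tendsto_const_iff by metis
qed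

lemma dpart_opnorm_tendsto_zero: "((\<lambda>t. opnorm S (dpart (D t))) \<longlongrightarrow> 0) at_infinity"
  using dnorm_sq_tendsto_zero unfolding dnorm_sq_def[abs_def] by (rule tendsto_opnorm_zero)

lemma op_spectrum_d_plus_dstar_squared:
  assumes "c \<in> op_spectrum S (mmul S (madd (dpart (D t)) (adj (dpart (D t)))) (madd (dpart (D t)) (adj (dpart (D t)))))"
  shows "Im c = 0 \<and> 0 \<le> Re c \<and> Re c \<le> frob_sq S (madd (dpart (D t)) (adj (dpart (D t))))"
  by (rule op_spectrum_mmul_selfadjoint[OF finite_S _ assms]) (simp add: madd_def adj_def)

lemma frob_sq_d_plus_dstar_le: "frob_sq S (madd (dpart (D t)) (adj (dpart (D t)))) \<le> 4 * dnorm_sq t"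
  using frob_sq_madd_le[of S "dpart (D t)" "adj (dpart (D t))"] by (simp add: frob_sq_adj dnorm_sq_def)

lemma frob_sq_d_plus_dstar_tendsto_zero:
  "((\<lambda>t. frob_sq S (madd (dpart (D t)) (adj (dpart (D t))))) \<longlongrightarrow> 0) at_infinity"
proof (rule tendsto_sandwich[of "\<lambda>_. 0" _ _ "\<lambda>t. 4 * dnorm_sq t"])
  show "((\<lambda>t. 4 * dnorm_sq t) \<longlongrightarrow> 0) at_infinity"
    using tendsto_mult_right_zero[OF dnorm_sq_tendsto_zero, of 4] by simp
qed (simp_all add: frob_sq_nonneg frob_sq_d_plus_dstar_le)

end

theorem mainTheorem11:
  fixes V :: "'v::linorder set" and E :: "'v \<Rightarrow> 'v \<Rightarrow> bool"
    and \<beta> :: real and D :: "real \<Rightarrow> 'v op"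
  assumes finV: "finite V"
    and symE: "\<And>u w. E u w \<Longrightarrow> E w u"
    and irrE: "\<And>u. \<not> E u u"
    and init: "\<forall>y\<in>simplices V E. \<forall>x\<in>simplices V E. D 0 y x = Dirac0 (simplices V E) y x"
    and ode: "\<forall>t. \<forall>y\<in>simplices V E. \<forall>x\<in>simplices V E.
       ((\<lambda>s. D s y x) has_vector_derivative
          msub (mmul (simplices V E) (Bop \<beta> (D t)) (D t))
               (mmul (simplices V E) (D t) (Bop \<beta> (D t))) y x) (at t)"
  shows "(\<exists>a :: real \<Rightarrow> real. (\<forall>t. a t \<ge> 0) \<and> (a \<longlongrightarrow> 0) at_infinity \<and>
            (\<forall>t. \<forall>c\<in>op_spectrum (simplices V E)
                  (mmul (simplices V E) (madd (dpart (D t)) (adj (dpart (D t))))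
                                        (madd (dpart (D t)) (adj (dpart (D t))))).
               Im c = 0 \<and> 0 \<le> Re c \<and> Re c \<le> a t))
      \<and> ((\<lambda>t. opnorm (simplices V E) (dpart (D t))) \<longlongrightarrow> 0) at_infinity
      \<and> (\<exists>binf. ((\<lambda>t. opnorm (simplices V E) (msub (bpart (D t)) binf)) \<longlongrightarrow> 0) at_top
               \<and> (\<forall>y\<in>simplices V E. \<forall>x\<in>simplices V E.
                    mmul (simplices V E) binf binf y x = Laplacian (simplices V E) y x))
      \<and> (\<exists>binf. ((\<lambda>t. opnorm (simplices V E) (msub (bpart (D t)) binf)) \<longlongrightarrow> 0) at_bot
               \<and> (\<forall>y\<in>simplices V E. \<forall>x\<in>simplices V E.
                    mmul (simplices V E) binf binf y x = Laplacian (simplices V E) y x))"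
proof -
  define S where "S = simplices V E"
  interpret dirac_flow S \<beta> D
    using finite_simplices[OF finV] blockdiag_Laplacian[OF finV] init ode
    by unfold_locales (simp_all add: S_def)
  have "\<exists>a. (\<forall>t. 0 \<le> a t) \<and> (a \<longlongrightarrow> 0) at_infinity \<and>
      (\<forall>t. \<forall>c\<in>op_spectrum S (mmul S (madd (dpart (D t)) (adj (dpart (D t))))
                                   (madd (dpart (D t)) (adj (dpart (D t))))).
         Im c = 0 \<and> 0 \<le> Re c \<and> Re c \<le> a t)"
    using frob_sq_d_plus_dstar_tendsto_zero op_spectrum_d_plus_dstar_squared frob_sq_nonneg
    by (intro exI[of _ "\<lambda>t. frob_sq S (madd (dpart (D t)) (adj (dpart (D t))))"]) blast
  then show ?thesis
    using dpart_opnorm_tendsto_zero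
      bpart_tendsto_binf[of at_top] binf_squared[of at_top]
      bpart_tendsto_binf[of at_bot] binf_squared[of at_bot]
    unfolding S_def by blast
qed

end
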